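(* Let $\mathcal T$ be an oscillating tableau of length $r$, and let $Q$ be the standard Young tableau produced from $\mathcal T$ by Sundaram's correspondence (as described in the context). Then $\mathrm{Des}(\mathcal T)=\mathrm{Des}(Q)$.
   Context: An oscillating tableau of length $r$ is a sequence of partitions $(\emptyset=\mu^0,\dots,\mu^r)$ with consecutive Ferrers diagrams (English notation) differing by exactly one box; step $k$ is an expansion or contraction according as the box $b_k$ is added or removed. $\mathrm{Des}(\mathcal T)$ is the set of $k\in\{1,\dots,r-1\}$ such that (i) step $k$ is an expansion and step $k+1$ a contraction, or (ii) both are expansions and $b_k$ is in a row strictly above $b_{k+1}$, or (iii) both are contractions and $b_k$ is in a row strictly below $b_{k+1}$. A partial Young tableau is a filling of a Ferrers shape by distinct positive integers increasing along rows and down columns; its descent set is $\{k: k,k+1 \text{ are entries and } k+1 \text{ lies in a row strictly below } k\}$. Column insertion of $x$ into a partial tableau: insert $x$ into the first column; if $x$ exceeds all entries of the column it is placed at the bottom of it, otherwise it replaces the smallest entry larger than $x$, and the replaced entry is inserted in the same way into the next column, and so on. Column deletion of the entry $y$ in a corner box lying in column $j$: remove it, then for the columns $j-1,j-2,\dots,1$ in turn replace the largest entry smaller than the current $y$ by $y$ and let $y$ be the replaced entry; the final $y$ is the output $x$. Sundaram's correspondence: (1) Set $\iota_0=\emptyset$, $T_0=\emptyset$. For $k=1,\dots,r$: if step $k$ is an expansion, $\iota_k=\iota_{k-1}$ and $T_k$ is $T_{k-1}$ with $k$ placed in box $b_k$; if step $k$ is a contraction, column-delete the entry of box $b_k$ from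 $T_{k-1}$, obtaining output $x$ and tableau $T_k$, and let $\iota_k$ be $\iota_{k-1}$ with the transposition $(x,k)$ adjoined. Let $\iota=\iota_r$ (a fixed-point-free involution on a set $A\subseteq\{1,\dots,r\}$) and $T=T_r$ (a partial tableau with entry set $\{1,\dots,r\}\setminus A$). (2) Writing $A=\{a_1<\dots<a_m\}$, let $I$ be the Robinson–Schensted (row) insertion tableau of the word $\iota(a_1)\iota(a_2)\cdots\iota(a_m)$. (3) Let the reverse reading word of $I$ be the word obtained by reading the rows of $I$ from top to bottom, each row from right to left. $Q$ is the tableau obtained by column inserting the letters of this word, in order, into $T$; it is a standard Young tableau with $r$ boxes. *)

theory Defs
  imports Main
begin

text \<open>A partition is a weakly decreasing list of positive integers (its parts).
  Boxes are pairs (row, column), 0-indexed, English notation: row 0 is the top row.\<close>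

definition is_partition :: "nat list \<Rightarrow> bool" where
  "is_partition lam \<longleftrightarrow> sorted_wrt (\<ge>) lam \<and> (\<forall>p\<in>set lam. 0 < p)"

definition diagram :: "nat list \<Rightarrow> (nat \<times> nat) set" where
  "diagram lam = {(i, j). i < length lam \<and> j < lam ! i}"

definition symdiff :: "'a set \<Rightarrow> 'a set \<Rightarrow> 'a set" where
  "symdiff A B = (A - B) \<union> (B - A)"

definition osc_tableau :: "nat \<Rightarrow> nat list list \<Rightarrow> bool" where
  "osc_tableau r mus \<longleftrightarrow> length mus = Suc r \<and> mus ! 0 = [] \<and>
     (\<forall>mu\<in>set mus. is_partition mu) \<and>
     (\<forall>k<r. card (symdiff (diagram (mus ! k)) (diagram (mus ! Suc k))) = 1)"

text \<open>Step k (1 \<le> k \<le> r): the box b_k, and whether it is an expansion.\<close>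
definition step_box :: "nat list list \<Rightarrow> nat \<Rightarrow> nat \<times> nat" where
  "step_box mus k = the_elem (symdiff (diagram (mus ! (k - 1))) (diagram (mus ! k)))"

definition is_exp :: "nat list list \<Rightarrow> nat \<Rightarrow> bool" where
  "is_exp mus k \<longleftrightarrow> diagram (mus ! (k - 1)) \<subset> diagram (mus ! k)"

definition osc_Des :: "nat list list \<Rightarrow> nat set" where
  "osc_Des mus = {k. 1 \<le> k \<and> k < length mus - 1 \<and>
     ((is_exp mus k \<and> \<not> is_exp mus (Suc k)) \<or>
      (is_exp mus k \<and> is_exp mus (Suc k) \<and> fst (step_box mus k) < fst (step_box mus (Suc k))) \<or>
      (\<not> is_exp mus k \<and> \<not> is_exp mus (Suc k) \<and> fst (step_box mus k) > fst (step_box mus (Suc k))))}"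

text \<open>A partial tableau is represented by its list of columns (left to right), each column
  listed from top to bottom; the entry in box (i, j) (row i, column j) is T ! j ! i.\<close>

definition tab_entries :: "nat list list \<Rightarrow> nat set" where
  "tab_entries T = (\<Union>c\<in>set T. set c)"

definition tab_row :: "nat list list \<Rightarrow> nat \<Rightarrow> nat" where
  "tab_row T v = (THE i. \<exists>j<length T. i < length (T ! j) \<and> T ! j ! i = v)"

definition tab_Des :: "nat list list \<Rightarrow> nat set" where
  "tab_Des T = {k. k \<in> tab_entries T \<and> Suc k \<in> tab_entries T \<and> tab_row T k < tab_row T (Suc k)}"

fun col_ins :: "nat \<Rightarrow> nat list list \<Rightarrow> nat list list" where
  "col_ins x [] = [[x]]"
| "col_ins x (c # cs) =
     (if \<forall>v\<in>set c. v < x then (c @ [x]) # cs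
      else (let z = Min {v \<in> set c. x < v}
            in map (\<lambda>v. if v = z then x else v) c # col_ins z cs))"

text \<open>Row (Robinson--Schensted) insertion of x into a tableau given as list of rows.\<close>
fun row_ins :: "nat \<Rightarrow> nat list list \<Rightarrow> nat list list" where
  "row_ins x [] = [[x]]"
| "row_ins x (r # rs) =
     (if \<forall>v\<in>set r. v < x then (r @ [x]) # rs
      else (let z = Min {v \<in> set r. x < v}
            in map (\<lambda>v. if v = z then x else v) r # row_ins z rs))"

text \<open>Backward bumping through columns given in right-to-left order (columns j-1, ..., 1).\<close>
fun bump_left :: "nat \<Rightarrow> nat list list \<Rightarrow> nat \<times> nat list list" where
  "bump_left y [] = (y, [])"
| "bump_left y (c # cs) =
     (let z = Max {v \<in> set c. v < y};
          (x, cs') = bump_left z cs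
      in (x, map (\<lambda>v. if v = z then y else v) c # cs'))"

definition col_del :: "nat list list \<Rightarrow> nat \<times> nat \<Rightarrow> nat \<times> nat list list" where
  "col_del T b = (case b of (i, j) \<Rightarrow>
     (let y = T ! j ! i;
          cj = take i (T ! j) @ drop (Suc i) (T ! j);
          (x, ls) = bump_left y (rev (take j T))
      in (x, rev ls @ cj # drop (Suc j) T)))"

definition place :: "nat list list \<Rightarrow> nat \<times> nat \<Rightarrow> nat \<Rightarrow> nat list list" where
  "place T b k = (case b of (i, j) \<Rightarrow>
     (let T' = T @ replicate (Suc j - length T) [];
          c = T' ! j
      in T'[j := take i c @ [k] @ drop (Suc i) c]))"

text \<open>The involution iota is recorded as the set of its transpositions (x, k).\<close>
definition inv_partner :: "(nat \<times> nat) set \<Rightarrow> nat \<Rightarrow> nat" where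
  "inv_partner P a = (THE b. (a, b) \<in> P \<or> (b, a) \<in> P)"

definition inv_support :: "(nat \<times> nat) set \<Rightarrow> nat set" where
  "inv_support P = fst ` P \<union> snd ` P"

definition sundaram_step ::
  "nat list list \<Rightarrow> (nat \<times> nat) set \<times> nat list list \<Rightarrow> nat \<Rightarrow> (nat \<times> nat) set \<times> nat list list" where
  "sundaram_step mus st k = (case st of (P, T) \<Rightarrow>
     (if is_exp mus k then (P, place T (step_box mus k) k)
      else (case col_del T (step_box mus k) of (x, T') \<Rightarrow> (insert (x, k) P, T'))))"

definition sundaram_part1 :: "nat list list \<Rightarrow> (nat \<times> nat) set \<times> nat list list" where
  "sundaram_part1 mus = foldl (sundaram_step mus) ({}, []) [1..<length mus]"

definition sundaram_Q :: "nat list list \<Rightarrow> nat list list" where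
  "sundaram_Q mus = (case sundaram_part1 mus of (P, T) \<Rightarrow>
     (let w = map (inv_partner P) (sorted_list_of_set (inv_support P));
          I = foldl (\<lambda>R x. row_ins x R) [] w;
          rrw = concat (map rev I)
      in foldl (\<lambda>S x. col_ins x S) T rrw))"

end

theory Submission
  imports Defs
begin

text \<open>
  In a standard tableau, k is a descent iff k + 1 lies in a column weakly left of k. We follow this
  relative column order of k and k + 1 through the construction. Column insertion of other letters
  preserves it, and if k and k + 1 both arrive through the reading word of I, the insertion tableau
  of the word of \<iota>, then k + 1 ends up weakly left of k iff \<iota>(k + 1) < \<iota>(k). This gives a
  criterion for k \<in> Des(Q) in terms of an intermediate pair (\<iota>_m, T_m); the criterion does not
  change along the steps m > k + 1, since placing the new largest entry m leaves relative columns
  alone and a column deletion preserves them except for the output letter, which becomes paired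
  with m.
  At m = k + 1 with two expansions it compares the rows of b_k and b_{k+1}. In the other cases
  one reads it off at m = r: an expansion is paired with a later contraction and a contraction
  with an earlier entry, while two consecutive column deletions output decreasing letters iff the
  second deleted box lies in a higher row.
\<close>

abbreviation entries :: "nat list list \<Rightarrow> nat set" where "entries T \<equiv> tab_entries T"

fun col_of :: "nat \<Rightarrow> nat list list \<Rightarrow> nat" where
  "col_of v [] = 0"
| "col_of v (c # cs) = (if v \<in> set c then 0 else Suc (col_of v cs))"

definition col_desc :: "nat list list \<Rightarrow> nat \<Rightarrow> bool" where
  "col_desc T k \<longleftrightarrow> col_of (Suc k) T \<le> col_of k T"

lemma entries_Nil[simp]: "entries [] = {}" by (simp add: tab_entries_def)
lemma entries_Cons[simp]: "entries (c # cs) = set c \<union> entries cs" by (simp add: tab_entries_def)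
lemma entries_append[simp]: "entries (xs @ ys) = entries xs \<union> entries ys" by (simp add: tab_entries_def)
lemma entries_eq_set_concat: "entries T = set (concat T)" by (simp add: tab_entries_def)
lemma finite_entries[simp]: "finite (entries T)" by (simp add: tab_entries_def)

lemma col_of_nth:
  assumes "distinct (concat L)" "c < length L" "v \<in> set (L ! c)"
  shows "col_of v L = c"
  using assms
proof (induction L arbitrary: c)
  case Nil then show ?case by simp
next
  case (Cons a L)
  show ?case
  proof (cases c)
    case 0 then show ?thesis using Cons by simp
  next
    case (Suc c')
    have "v \<in> entries L" using Cons Suc by (auto simp: tab_entries_def)
    hence "v \<notin> set a" using Cons.prems(1) by (auto simp: tab_entries_def)
    then show ?thesis using Cons Suc by simp
  qed
qed

lemma col_of_bound: "v \<in> entries L \<Longrightarrow> col_of v L < length L \<and> v \<in> set (L ! col_of v L)"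
  by (induction L) auto

definition col_replace :: "nat \<Rightarrow> nat \<Rightarrow> nat list \<Rightarrow> nat list" where
  "col_replace z x c = map (\<lambda>v. if v = z then x else v) c"

lemma set_col_replace: "z \<in> set c \<Longrightarrow> set (col_replace z x c) = insert x (set c - {z})"
  by (auto simp: col_replace_def)

lemma distinct_col_replace: "distinct c \<Longrightarrow> x \<notin> set c \<Longrightarrow> distinct (col_replace z x c)"
  unfolding col_replace_def by (induction c) auto

lemma length_col_replace[simp]: "length (col_replace z x c) = length c" by (simp add: col_replace_def)

lemma sorted_col_replace:
  assumes "sorted_wrt (<) c" "x \<notin> set c" "\<And>v. v \<in> set c \<Longrightarrow> v \<noteq> z \<Longrightarrow> (v < z \<longleftrightarrow> v < x)"
    "z \<in> set c"
  shows "sorted_wrt (<) (col_replace z x c)"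
proof -
  have d: "distinct c" using assms(1) strict_sorted_iff by blast
  show ?thesis unfolding sorted_wrt_iff_nth_less col_replace_def
  proof (intro allI impI)
    fix i j assume ij: "i < j" "j < length (map (\<lambda>v. if v = z then x else v) c)"
    hence j_less: "j < length c" by simp
    have lt: "c ! i < c ! j" using assms(1) ij j_less by (simp add: sorted_wrt_iff_nth_less)
    have ne: "c ! i \<noteq> c ! j" using lt by simp
    have ci: "c!i \<in> set c" "c!j \<in> set c" using ij j_less by auto
    have h1: "c!i \<noteq> z \<Longrightarrow> (c!i < z \<longleftrightarrow> c!i < x)" using assms(3) ci(1) by blast
    have h2: "c!j \<noteq> z \<Longrightarrow> (c!j < z \<longleftrightarrow> c!j < x)" using assms(3) ci(2) by blast
    have h3: "c!i \<noteq> x" "c!j \<noteq> x" using assms(2) ci by auto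
    show "map (\<lambda>v. if v = z then x else v) c ! i < map (\<lambda>v. if v = z then x else v) c ! j"
      using ij j_less lt ne h1 h2 h3 by (auto simp: nth_map)
  qed
qed

section \<open>Column insertion\<close>

text \<open>Row insertion into a list of rows is column insertion into a list of columns, so everything
  proved about column insertion also describes the insertion tableau I, stored by rows.\<close>

lemma row_ins_eq_col_ins: "row_ins = col_ins"
proof (intro ext)
  fix x L show "row_ins x L = col_ins x L"
    by (induction x L rule: row_ins.induct) (simp_all add: Let_def)
qed

lemma col_ins_Cons_bump: "\<not> (\<forall>v\<in>set c. v < x) \<Longrightarrow>
  col_ins x (c # cs) = col_replace (Min {v \<in> set c. x < v}) x c # col_ins (Min {v \<in> set c. x < v}) cs"
  by (simp add: col_replace_def Let_def)

lemma Min_greater: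
  assumes "\<not> (\<forall>v\<in>set c. v < (x::nat))" "x \<notin> set c"
  shows "Min {v \<in> set c. x < v} \<in> set c" "x < Min {v \<in> set c. x < v}"
    "\<And>v. v \<in> set c \<Longrightarrow> x < v \<Longrightarrow> Min {v \<in> set c. x < v} \<le> v"
proof -
  have ne: "{v \<in> set c. x < v} \<noteq> {}" using assms by (auto simp: not_less order.order_iff_strict)
  have f: "finite {v \<in> set c. x < v}" by simp
  show "Min {v \<in> set c. x < v} \<in> set c" "x < Min {v \<in> set c. x < v}"
    using Min_in[OF f ne] by auto
  show "\<And>v. v \<in> set c \<Longrightarrow> x < v \<Longrightarrow> Min {v \<in> set c. x < v} \<le> v" using f by auto
qed

lemma entries_col_ins: "distinct (concat L) \<Longrightarrow> x \<notin> entries L \<Longrightarrow> entries (col_ins x L) = insert x (entries L)"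
proof (induction x L rule: col_ins.induct)
  case (1 x) then show ?case by simp
next
  case (2 x c cs)
  show ?case
  proof (cases "\<forall>v\<in>set c. v < x")
    case True then show ?thesis by auto
  next
    case False
    define z where "z = Min {v \<in> set c. x < v}"
    have xc: "x \<notin> set c" using 2(3) by simp
    have zc: "z \<in> set c" "x < z"
      using Min_greater[OF False xc] z_def by auto
    have zcs: "z \<notin> entries cs" using 2(2) zc by (auto simp: tab_entries_def)
    have dcs: "distinct (concat cs)" using 2(2) by simp
    have IH: "entries (col_ins z cs) = insert z (entries cs)" using 2(1)[OF False z_def dcs zcs] .
    have "col_ins x (c # cs) = col_replace z x c # col_ins z cs" using col_ins_Cons_bump[OF False] z_def by simp
    then show ?thesis using IH set_col_replace[OF zc(1), of x] zc by auto
  qed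
qed

lemma distinct_col_ins:
  "distinct (concat L) \<Longrightarrow> x \<notin> entries L \<Longrightarrow> distinct (concat (col_ins x L))"
proof (induction x L rule: col_ins.induct)
  case (1 x) then show ?case by simp
next
  case (2 x c cs)
  have xc: "x \<notin> set c" using 2 by simp
  show ?case
  proof (cases "\<forall>v\<in>set c. v < x")
    case True then show ?thesis using 2 by (auto simp: tab_entries_def)
  next
    case False
    define z where "z = Min {v \<in> set c. x < v}"
    have zc: "z \<in> set c" "x < z" using Min_greater[OF False xc] unfolding z_def by auto
    have "z \<notin> entries cs" using 2(2) zc by (auto simp: tab_entries_def)
    hence IH: "distinct (concat (col_ins z cs))" using 2 False z_def by (auto simp: tab_entries_def)
    have e: "set (concat (col_ins z cs)) = insert z (entries cs)" using entries_col_ins[OF _ \<open>z \<notin> entries cs\<close>] 2(2) entries_eq_set_concat by (metis distinct_append concat.simps(2))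
    have d1: "distinct (col_replace z x c)" using distinct_col_replace[of c x z] 2(2) xc by simp
    have s1: "set (col_replace z x c) = insert x (set c - {z})" using set_col_replace zc by simp
    have "x \<notin> entries cs" using 2(3) by simp
    then have "set (col_replace z x c) \<inter> set (concat (col_ins z cs)) = {}"
      using s1 e 2(2) zc(2) by (auto simp: tab_entries_def)
    then show ?thesis using col_ins_Cons_bump[OF False] z_def IH d1 by simp
  qed
qed

lemma col_ins_hd_contains: "x \<notin> entries L \<Longrightarrow> \<exists>c' cs'. col_ins x L = c' # cs' \<and> x \<in> set c'"
proof (cases L)
  case Nil then show ?thesis by simp
next
  case (Cons c cs)
  assume xL: "x \<notin> entries L"
  show ?thesis
  proof (cases "\<forall>v\<in>set c. v < x")
    case True then show ?thesis using Cons by simp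
  next
    case False
    have xc: "x \<notin> set c" using xL Cons by simp
    define z where "z = Min {v \<in> set c. x < v}"
    have zc: "z \<in> set c" "x < z" using Min_greater[OF False xc] unfolding z_def by auto
    have "x \<in> set (col_replace z x c)" using set_col_replace[OF zc(1)] by simp
    then show ?thesis using Cons col_ins_Cons_bump[OF False] z_def by simp
  qed
qed

lemma col_of_col_ins_self: "x \<notin> entries L \<Longrightarrow> col_of x (col_ins x L) = 0"
  using col_ins_hd_contains[of x L] by auto

lemma col_desc_col_ins_Suc: "Suc k \<notin> entries L \<Longrightarrow> col_desc (col_ins (Suc k) L) k"
  using col_of_col_ins_self by (simp add: col_desc_def)

lemma not_col_desc_col_ins_pred:
  assumes "distinct (concat L)" "Suc k \<in> entries L" "k \<notin> entries L"
  shows "\<not> col_desc (col_ins k L) k"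
proof -
  have "0 < col_of (Suc k) (col_ins k L)"
  proof (cases L)
    case Nil then show ?thesis using assms by simp
  next
    case (Cons c cs)
    have kc: "k \<notin> set c" using assms Cons by simp
    show ?thesis
    proof (cases "\<forall>v\<in>set c. v < k")
      case True
      hence "Suc k \<notin> set c" by auto
      then show ?thesis using Cons True by simp
    next
      case False
      define z where "z = Min {v \<in> set c. k < v}"
      have zc: "z \<in> set c" "k < z" "\<forall>v\<in>set c. k < v \<longrightarrow> z \<le> v"
        using Min_greater[OF False kc] unfolding z_def by auto
      have "Suc k \<notin> set (col_replace z k c)"
      proof (cases "Suc k \<in> set c")
        case True
        hence "z = Suc k" using zc by (meson Suc_leI le_antisym lessI)
        then show ?thesis using set_col_replace[OF zc(1)] by simp
      next
        case False
        then show ?thesis using set_col_replace[OF zc(1)] by auto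
      qed
      then show ?thesis using Cons col_ins_Cons_bump[OF False] z_def by simp
    qed
  qed
  then show ?thesis using col_of_col_ins_self[OF assms(3)] by (simp add: col_desc_def)
qed

lemma col_desc_col_ins:
  assumes "distinct (concat L)" "x \<notin> entries L" "k \<in> entries L" "Suc k \<in> entries L" "x \<noteq> k" "x \<noteq> Suc k"
  shows "col_desc (col_ins x L) k \<longleftrightarrow> col_desc L k"
  using assms
proof (induction x L rule: col_ins.induct)
  case (1 x) then show ?case by simp
next
  case (2 x c cs)
  have xc: "x \<notin> set c" using 2 by simp
  have dcs: "distinct (concat cs)" and disj: "set c \<inter> entries cs = {}"
    using 2(2) by (auto simp: tab_entries_def)
  show ?case
  proof (cases "\<forall>v\<in>set c. v < x")
    case True then show ?thesis using 2 by (simp add: col_desc_def)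
  next
    case False
    define z where "z = Min {v \<in> set c. x < v}"
    have zc: "z \<in> set c" "x < z" "\<forall>v\<in>set c. x < v \<longrightarrow> z \<le> v"
      using Min_greater[OF False xc] unfolding z_def by auto
    have eq: "col_ins x (c # cs) = col_replace z x c # col_ins z cs"
      using col_ins_Cons_bump[OF False] z_def by simp
    have sr: "\<And>v. v \<in> set (col_replace z x c) \<longleftrightarrow> (v = x \<or> (v \<in> set c \<and> v \<noteq> z))"
      using set_col_replace[OF zc(1)] by auto
    have zcs: "z \<notin> entries cs" using disj zc by auto
    consider (at_k) "z = k" | (at_Suc_k) "z = Suc k" | (other) "z \<noteq> k" "z \<noteq> Suc k" by blast
    then show ?thesis
    proof cases
      case at_k
      have kc: "k \<in> set c" using zc at_k by simp
      show ?thesis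
      proof (cases "Suc k \<in> set c")
        case True
        then show ?thesis using kc sr at_k eq 2(6,7) by (auto simp: col_desc_def)
      next
        case False
        hence "\<not> col_desc (col_ins k cs) k"
          using not_col_desc_col_ins_pred[OF dcs] 2(5) zcs at_k by simp
        then show ?thesis using eq at_k False sr kc 2(7) by (auto simp: col_desc_def)
      qed
    next
      case at_Suc_k
      have "k \<notin> set c"
      proof
        assume "k \<in> set c"
        moreover have "x < k" using zc(2) at_Suc_k 2(6) by simp
        ultimately show False using zc(3) at_Suc_k by fastforce
      qed
      moreover have "col_desc (col_ins (Suc k) cs) k" using col_desc_col_ins_Suc zcs at_Suc_k by simp
      ultimately show ?thesis using eq at_Suc_k sr zc 2(6) 2(7) by (auto simp: col_desc_def)
    next
      case other
      show ?thesis
      proof (cases "k \<in> set c \<or> Suc k \<in> set c")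
        case True
        then show ?thesis using eq sr other 2(6,7) by (auto simp: col_desc_def)
      next
        case False
        hence "k \<in> entries cs" "Suc k \<in> entries cs" using 2(4,5) by auto
        hence "col_desc (col_ins z cs) k \<longleftrightarrow> col_desc cs k"
          using "2.IH"[OF \<open>\<not> (\<forall>v\<in>set c. v < x)\<close> z_def dcs zcs] other by blast
        then show ?thesis using eq sr False 2(6,7) by (auto simp: col_desc_def)
      qed
    qed
  qed
qed

section \<open>Tableaux\<close>

definition count_below :: "nat set \<Rightarrow> nat \<Rightarrow> nat" where "count_below S t = card {v\<in>S. v < t}"
definition count_upto :: "nat set \<Rightarrow> nat \<Rightarrow> nat" where "count_upto S t = card {v\<in>S. v \<le> t}"

lemma count_below_insert: "finite S \<Longrightarrow> x \<notin> S \<Longrightarrow> count_below (insert x S) t = count_below S t + (if x < t then 1 else 0)"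
proof -
  assume f: "finite S" and x: "x \<notin> S"
  show ?thesis
  proof (cases "x < t")
    case True
    hence "{v\<in>insert x S. v < t} = insert x {v\<in>S. v < t}" by auto
    then show ?thesis using f x True by (simp add: count_below_def)
  next
    case False
    hence "{v\<in>insert x S. v < t} = {v\<in>S. v < t}" by auto
    then show ?thesis using False by (simp add: count_below_def)
  qed
qed

lemma count_upto_insert: "finite S \<Longrightarrow> x \<notin> S \<Longrightarrow> count_upto (insert x S) t = count_upto S t + (if x \<le> t then 1 else 0)"
proof -
  assume f: "finite S" and x: "x \<notin> S"
  show ?thesis
  proof (cases "x \<le> t")
    case True
    hence "{v\<in>insert x S. v \<le> t} = insert x {v\<in>S. v \<le> t}" by auto
    then show ?thesis using f x True by (simp add: count_upto_def)
  next
    case False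
    hence "{v\<in>insert x S. v \<le> t} = {v\<in>S. v \<le> t}" by auto
    then show ?thesis using False by (simp add: count_upto_def)
  qed
qed

lemma count_below_remove: "finite S \<Longrightarrow> z \<in> S \<Longrightarrow> count_below (S - {z}) t + (if z < t then 1 else 0) = count_below S t"
  using count_below_insert[of "S - {z}" z t] by (simp add: insert_absorb)

lemma count_upto_remove: "finite S \<Longrightarrow> z \<in> S \<Longrightarrow> count_upto (S - {z}) t + (if z \<le> t then 1 else 0) = count_upto S t"
  using count_upto_insert[of "S - {z}" z t] by (simp add: insert_absorb)

lemma count_upto_eq_count_below: "finite S \<Longrightarrow> count_upto S t = count_below S t + (if t \<in> S then 1 else 0)"
proof -
  assume f: "finite S"
  show ?thesis
  proof (cases "t \<in> S")
    case True
    hence "{v\<in>S. v \<le> t} = insert t {v\<in>S. v < t}" by auto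
    then show ?thesis using f True by (simp add: count_upto_def count_below_def)
  next
    case False
    have "\<And>v. v \<in> S \<Longrightarrow> (v \<le> t) = (v < t)" using False by (metis le_less)
    hence "{v\<in>S. v \<le> t} = {v\<in>S. v < t}" by blast
    then show ?thesis using False by (simp add: count_upto_def count_below_def)
  qed
qed

lemma count_upto_le_count_below: "finite S \<Longrightarrow> t < t' \<Longrightarrow> count_upto S t \<le> count_below S t'"
  unfolding count_upto_def count_below_def by (rule card_mono) auto

lemma count_below_le_count_upto: "finite S \<Longrightarrow> count_below S t \<le> count_upto S t"
  unfolding count_upto_def count_below_def by (rule card_mono) auto

lemma count_below_gap: "(\<And>v. v \<in> S \<Longrightarrow> t \<le> v \<Longrightarrow> t' \<le> v) \<Longrightarrow> t \<le> t' \<Longrightarrow> count_below S t' = count_below S t"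
proof -
  assume h: "\<And>v. v \<in> S \<Longrightarrow> t \<le> v \<Longrightarrow> t' \<le> v" and tt: "t \<le> t'"
  have "\<And>v. v \<in> S \<Longrightarrow> (v < t') = (v < t)"
  proof -
    fix v assume "v \<in> S"
    show "(v < t') = (v < t)" using h[OF \<open>v \<in> S\<close>] tt by linarith
  qed
  hence "{v\<in>S. v < t'} = {v\<in>S. v < t}" by blast
  then show ?thesis by (simp add: count_below_def)
qed

lemma count_upto_gap: "(\<And>v. v \<in> S \<Longrightarrow> t < v \<Longrightarrow> t' < v) \<Longrightarrow> t \<le> t' \<Longrightarrow> count_upto S t' = count_upto S t"
proof -
  assume h: "\<And>v. v \<in> S \<Longrightarrow> t < v \<Longrightarrow> t' < v" and tt: "t \<le> t'"
  have "\<And>v. v \<in> S \<Longrightarrow> (v \<le> t') = (v \<le> t)"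
  proof -
    fix v assume "v \<in> S"
    show "(v \<le> t') = (v \<le> t)" using h[OF \<open>v \<in> S\<close>] tt by linarith
  qed
  hence "{v\<in>S. v \<le> t'} = {v\<in>S. v \<le> t}" by blast
  then show ?thesis by (simp add: count_upto_def)
qed

lemma count_below_less_elem: "finite S \<Longrightarrow> z \<in> S \<Longrightarrow> z < t \<Longrightarrow> count_below S z + 1 \<le> count_below S t"
proof -
  assume f: "finite S" "z \<in> S" "z < t"
  have "insert z {v\<in>S. v < z} \<subseteq> {v\<in>S. v < t}" using f by auto
  hence "card (insert z {v\<in>S. v < z}) \<le> card {v\<in>S. v < t}" using f by (intro card_mono) auto
  then show ?thesis using f by (simp add: count_below_def)
qed

lemma count_below_le_card: "finite S \<Longrightarrow> count_below S t \<le> card S" unfolding count_below_def by (rule card_mono) auto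
lemma count_upto_le_card: "finite S \<Longrightarrow> count_upto S t \<le> card S" unfolding count_upto_def by (rule card_mono) auto
lemma count_below_all: "finite S \<Longrightarrow> \<forall>v\<in>S. v < t \<Longrightarrow> count_below S t = card S"
  unfolding count_below_def proof - assume "\<forall>v\<in>S. v < t" hence "{v\<in>S. v < t} = S" by blast thus "card {v\<in>S. v < t} = card S" by simp qed
lemma count_upto_all: "finite S \<Longrightarrow> \<forall>v\<in>S. v \<le> t \<Longrightarrow> count_upto S t = card S"
  unfolding count_upto_def proof - assume "\<forall>v\<in>S. v \<le> t" hence "{v\<in>S. v \<le> t} = S" by blast thus "card {v\<in>S. v \<le> t} = card S" by simp qed

text \<open>For strictly increasing columns a and b, dominates a b says that b is no longer than a and
  every entry of b exceeds the entry of a in the same row.\<close>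

definition dominates :: "nat list \<Rightarrow> nat list \<Rightarrow> bool" where
  "dominates a b \<longleftrightarrow> (\<forall>t. count_upto (set b) t \<le> count_below (set a) t)"

definition wf_tab :: "nat list list \<Rightarrow> bool" where
  "wf_tab T \<longleftrightarrow> (\<forall>c\<in>set T. sorted_wrt (<) c) \<and> distinct (concat T) \<and>
     (\<forall>m. Suc m < length T \<longrightarrow> dominates (T!m) (T!Suc m))"

lemma wf_tab_Nil[simp]: "wf_tab []" by (simp add: wf_tab_def)

lemma wf_tab_Cons: "wf_tab (c # cs) \<longleftrightarrow> sorted_wrt (<) c \<and> wf_tab cs \<and> set c \<inter> entries cs = {} \<and> (cs \<noteq> [] \<longrightarrow> dominates c (hd cs))"
proof -
  have ch: "(\<forall>m. Suc m < length (c#cs) \<longrightarrow> dominates ((c#cs)!m) ((c#cs)!Suc m)) \<longleftrightarrow>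
     (cs \<noteq> [] \<longrightarrow> dominates c (hd cs)) \<and> (\<forall>m. Suc m < length cs \<longrightarrow> dominates (cs!m) (cs!Suc m))"
  proof
    assume h: "\<forall>m. Suc m < length (c#cs) \<longrightarrow> dominates ((c#cs)!m) ((c#cs)!Suc m)"
    have "cs \<noteq> [] \<longrightarrow> dominates c (hd cs)" using h[rule_format, of 0] by (cases cs) auto
    moreover have "\<forall>m. Suc m < length cs \<longrightarrow> dominates (cs!m) (cs!Suc m)"
      using h by (metis Suc_less_eq length_Cons nth_Cons_Suc)
    ultimately show "(cs \<noteq> [] \<longrightarrow> dominates c (hd cs)) \<and> (\<forall>m. Suc m < length cs \<longrightarrow> dominates (cs!m) (cs!Suc m))" by blast
  next
    assume h: "(cs \<noteq> [] \<longrightarrow> dominates c (hd cs)) \<and> (\<forall>m. Suc m < length cs \<longrightarrow> dominates (cs!m) (cs!Suc m))"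
    show "\<forall>m. Suc m < length (c#cs) \<longrightarrow> dominates ((c#cs)!m) ((c#cs)!Suc m)"
    proof (intro allI impI)
      fix m assume m: "Suc m < length (c#cs)"
      show "dominates ((c#cs)!m) ((c#cs)!Suc m)"
      proof (cases m)
        case 0 then show ?thesis using h m by (cases cs) auto
      next
        case (Suc m') then show ?thesis using h m by simp
      qed
    qed
  qed
  show ?thesis unfolding wf_tab_def ch
    by (auto simp: tab_entries_def strict_sorted_iff)
qed

lemma dominates_trans: "dominates a b \<Longrightarrow> dominates b c \<Longrightarrow> dominates a c"
  unfolding dominates_def by (meson count_below_le_count_upto finite_set le_trans)

lemma wf_tab_dominates: "wf_tab T \<Longrightarrow> m < n \<Longrightarrow> n < length T \<Longrightarrow> dominates (T!m) (T!n)"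
proof (induction n)
  case 0 then show ?case by simp
next
  case (Suc n)
  have d1: "dominates (T!n) (T!Suc n)" using Suc.prems unfolding wf_tab_def by blast
  show ?case
  proof (cases "m = n")
    case True then show ?thesis using d1 by simp
  next
    case False then show ?thesis using Suc d1 dominates_trans by (meson Suc_lessD less_Suc_eq)
  qed
qed

lemma dominates_card: "dominates a b \<Longrightarrow> card (set b) \<le> card (set a)"
proof -
  assume d: "dominates a b"
  have "count_upto (set b) (sum_list b) = card (set b)" by (rule count_upto_all) (auto simp: member_le_sum_list)
  moreover have "count_below (set a) (sum_list b) \<le> card (set a)" by (rule count_below_le_card) simp
  ultimately show ?thesis using d unfolding dominates_def by (metis le_trans)
qed

definition row_of :: "nat list list \<Rightarrow> nat \<Rightarrow> nat" where
  "row_of T v = count_below (set (T ! col_of v T)) v"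

lemma wf_tab_distinct: "wf_tab T \<Longrightarrow> distinct (concat T)" by (simp add: wf_tab_def)
lemma wf_tab_sorted: "wf_tab T \<Longrightarrow> c \<in> set T \<Longrightarrow> sorted_wrt (<) c" by (simp add: wf_tab_def)

lemma count_below_Suc: "finite S \<Longrightarrow> count_below S (Suc k) = count_below S k + (if k \<in> S then 1 else 0)"
proof -
  assume f: "finite S"
  have "count_below S (Suc k) = count_upto S k" unfolding count_below_def count_upto_def by (simp add: less_Suc_eq_le)
  then show ?thesis using count_upto_eq_count_below[OF f] by simp
qed

lemma col_desc_iff_row_less:
  assumes w: "wf_tab T" and k: "k \<in> entries T" and sk: "Suc k \<in> entries T"
  shows "(col_of (Suc k) T \<le> col_of k T) \<longleftrightarrow> row_of T k < row_of T (Suc k)"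
proof -
  define c1 where "c1 = col_of k T"
  define c2 where "c2 = col_of (Suc k) T"
  have b1: "c1 < length T" "k \<in> set (T!c1)" using col_of_bound[OF k] c1_def by auto
  have b2: "c2 < length T" "Suc k \<in> set (T!c2)" using col_of_bound[OF sk] c2_def by auto
  have d: "distinct (concat T)" using w wf_tab_distinct by blast
  have r1: "row_of T k = count_below (set (T!c1)) k" by (simp add: row_of_def c1_def)
  have r2: "row_of T (Suc k) = count_below (set (T!c2)) (Suc k)" by (simp add: row_of_def c2_def)
  have e1: "count_upto (set (T!c1)) k = count_below (set (T!c1)) k + 1" using count_upto_eq_count_below[of "set (T!c1)" k] b1 by simp
  have e2: "count_upto (set (T!c2)) (Suc k) = count_below (set (T!c2)) (Suc k) + 1" using count_upto_eq_count_below[of "set (T!c2)" "Suc k"] b2 by simp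
  consider "c2 < c1" | "c2 = c1" | "c1 < c2" by linarith
  then show ?thesis
  proof cases
    case 1
    have "k \<notin> set (T!c2)" using col_of_nth[OF d b2(1)] 1 c1_def by fastforce
    hence "count_below (set (T!c2)) (Suc k) = count_below (set (T!c2)) k" using count_below_Suc by simp
    moreover have "count_upto (set (T!c1)) k \<le> count_below (set (T!c2)) k" using wf_tab_dominates[OF w 1 b1(1)] unfolding dominates_def by blast
    ultimately show ?thesis using 1 r1 r2 e1 c1_def c2_def by simp
  next
    case 2
    then show ?thesis using r1 r2 count_below_Suc[of "set (T!c1)" k] b1 c1_def c2_def by simp
  next
    case 3
    have "count_upto (set (T!c2)) (Suc k) \<le> count_below (set (T!c1)) (Suc k)" using wf_tab_dominates[OF w 3 b2(1)] unfolding dominates_def by blast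
    moreover have "count_below (set (T!c1)) (Suc k) = count_below (set (T!c1)) k + 1" using count_below_Suc[of "set (T!c1)" k] b1 by simp
    ultimately show ?thesis using 3 r1 r2 e2 c1_def c2_def by simp
  qed
qed

lemma count_below_nth:
  assumes "sorted_wrt (<) c" "i < length c"
  shows "count_below (set c) (c!i) = i"
proof -
  have dist: "distinct c" using assms(1) strict_sorted_iff by blast
  have "{u \<in> set c. u < c!i} = (\<lambda>p. c!p) ` {..<i}"
  proof
    show "{u \<in> set c. u < c!i} \<subseteq> (\<lambda>p. c!p) ` {..<i}"
    proof
      fix u assume u: "u \<in> {u \<in> set c. u < c!i}"
      then obtain p where p: "p < length c" "c!p = u" by (auto simp: in_set_conv_nth)
      have "p < i"
      proof (rule ccontr)
        assume "\<not> p < i"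
        hence "i \<le> p" by simp
        hence "c!i \<le> c!p"
        proof (cases "i = p")
          case False
          hence "i < p" using \<open>i \<le> p\<close> by simp
          then show ?thesis using assms(1) p(1) by (simp add: sorted_wrt_iff_nth_less less_imp_le)
        qed simp
        then show False using u p by simp
      qed
      then show "u \<in> (\<lambda>p. c!p) ` {..<i}" using p by auto
    qed
  next
    show "(\<lambda>p. c!p) ` {..<i} \<subseteq> {u \<in> set c. u < c!i}"
      using assms by (auto simp: sorted_wrt_iff_nth_less)
  qed
  moreover have "inj_on (\<lambda>p. c!p) {..<i}"
    using dist assms(2) by (auto simp: inj_on_def nth_eq_iff_index_eq)
  ultimately show ?thesis unfolding count_below_def by (simp add: card_image)
qed

lemma tab_row_eq_row_of:
  assumes w: "wf_tab T" and v: "v \<in> entries T"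
  shows "tab_row T v = row_of T v"
proof -
  define j where "j = col_of v T"
  have b: "j < length T" "v \<in> set (T!j)" using col_of_bound[OF v] j_def by auto
  have s: "sorted_wrt (<) (T!j)" using w b(1) wf_tab_sorted by auto
  obtain i where i: "i < length (T!j)" "T!j!i = v" using b(2) by (auto simp: in_set_conv_nth)
  have ri: "row_of T v = i" using count_below_nth[OF s i(1)] i(2) j_def by (simp add: row_of_def)
  have "\<exists>j<length T. i < length (T ! j) \<and> T ! j ! i = v" using b i by blast
  moreover have "\<And>i'. (\<exists>j<length T. i' < length (T ! j) \<and> T ! j ! i' = v) \<Longrightarrow> i' = i"
  proof -
    fix i' assume "\<exists>j<length T. i' < length (T ! j) \<and> T ! j ! i' = v"
    then obtain j' where j': "j' < length T" "i' < length (T!j')" "T!j'!i' = v" by blast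
    have "j' = j" using col_of_nth[OF wf_tab_distinct[OF w] j'(1)] j' j_def by (metis nth_mem)
    then show "i' = i" using count_below_nth[OF s] j' i by (metis)
  qed
  ultimately have "tab_row T v = i" unfolding tab_row_def by (rule the_equality)
  then show ?thesis using ri by simp
qed

lemma dominance_after_bump:
  fixes A B B' :: "nat set"
  assumes fA: "finite A" and fB: "finite B"
    and dm: "\<forall>t. count_upto B t \<le> count_below A t"
    and xA: "x \<notin> A" and zA: "z \<in> A" and xz: "x < z"
    and zB: "z \<notin> B"
    and Bc: "(B' = insert z B \<and> (\<forall>v\<in>B. v < z)) \<or>
             (\<exists>z'. z' \<in> B \<and> z < z' \<and> (\<forall>v\<in>B. z < v \<longrightarrow> z' \<le> v) \<and> B' = insert z (B - {z'}))"
  shows "\<forall>t. count_upto B' t \<le> count_below (insert x (A - {z})) t"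
proof
  fix t
  have fA': "finite (A - {z})" using fA by simp
  have cA': "count_below (insert x (A - {z})) t = count_below (A - {z}) t + (if x < t then 1 else 0)"
    using count_below_insert[OF fA', of x t] xA by simp
  have cA2: "count_below (A - {z}) t + (if z < t then 1 else 0) = count_below A t" using count_below_remove[OF fA zA] by simp
  have dz: "count_upto B z \<le> count_below A z" using dm by blast
  have dt: "count_upto B t \<le> count_below A t" using dm by blast
  show "count_upto B' t \<le> count_below (insert x (A - {z})) t"
  proof (cases "t < z")
    case True
    have "count_upto B' t \<le> count_upto B t"
      using Bc
    proof
      assume h: "B' = insert z B \<and> (\<forall>v\<in>B. v < z)"
      then show ?thesis using count_upto_insert[OF fB zB, of t] True by simp
    next
      assume "\<exists>z'. z' \<in> B \<and> z < z' \<and> (\<forall>v\<in>B. z < v \<longrightarrow> z' \<le> v) \<and> B' = insert z (B - {z'})"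
      then obtain z' where h: "z' \<in> B" "z < z'" "B' = insert z (B - {z'})" by blast
      have "count_upto B' t = count_upto (B - {z'}) t" using count_upto_insert[of "B - {z'}" z t] fB zB h True by simp
      also have "\<dots> \<le> count_upto B t" using count_upto_remove[OF fB h(1), of t] by simp
      finally show ?thesis .
    qed
    then show ?thesis using cA' cA2 dt True by simp
  next
    case False
    hence zt: "z \<le> t" by simp
    have A_t: "count_below (insert x (A - {z})) t = count_below A t + (if t = z then 1 else 0)"
      using cA' cA2 xz zt by (cases "t = z") auto
    have key: "count_upto B t + 1 \<le> count_below (insert x (A - {z})) t" if gap: "\<forall>v\<in>B. z < v \<longrightarrow> t < v"
    proof -
      have "count_upto B t = count_upto B z" using count_upto_gap[of B z t] gap zt by blast
      show ?thesis
      proof (cases "t = z")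
        case True then show ?thesis using A_t dz by simp
      next
        case False
        hence "z < t" using zt by simp
        hence "count_below A z + 1 \<le> count_below A t" using count_below_less_elem[OF fA zA] by simp
        then show ?thesis using A_t dz \<open>count_upto B t = count_upto B z\<close> False by simp
      qed
    qed
    show ?thesis
      using Bc
    proof
      assume h: "B' = insert z B \<and> (\<forall>v\<in>B. v < z)"
      have "count_upto B' t = count_upto B t + 1" using count_upto_insert[OF fB zB, of t] h zt by simp
      moreover have "\<forall>v\<in>B. z < v \<longrightarrow> t < v" using h by auto
      ultimately show ?thesis using key by simp
    next
      assume "\<exists>z'. z' \<in> B \<and> z < z' \<and> (\<forall>v\<in>B. z < v \<longrightarrow> z' \<le> v) \<and> B' = insert z (B - {z'})"
      then obtain z' where h: "z' \<in> B" "z < z'" "\<forall>v\<in>B. z < v \<longrightarrow> z' \<le> v" "B' = insert z (B - {z'})" by blast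
      have c1: "count_upto B' t = count_upto (B - {z'}) t + 1" using count_upto_insert[of "B - {z'}" z t] fB zB h zt by simp
      have c2: "count_upto (B - {z'}) t + (if z' \<le> t then 1 else 0) = count_upto B t" using count_upto_remove[OF fB h(1)] by simp
      show ?thesis
      proof (cases "z' \<le> t")
        case True
        hence "z \<noteq> t" using h(2) by simp
        then show ?thesis using c1 c2 True A_t dt by simp
      next
        case False
        hence "\<forall>v\<in>B. z < v \<longrightarrow> t < v" using h(3) by (meson le_trans not_le)
        then show ?thesis using key c1 c2 False by simp
      qed
    qed
  qed
qed

lemma set_hd_col_ins:
  assumes "z \<notin> set d"
  shows "(set (hd (col_ins z (d # ds))) = insert z (set d) \<and> (\<forall>v\<in>set d. v < z)) \<or>
     (\<exists>z'. z' \<in> set d \<and> z < z' \<and> (\<forall>v\<in>set d. z < v \<longrightarrow> z' \<le> v) \<and> set (hd (col_ins z (d # ds))) = insert z (set d - {z'}))"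
proof (cases "\<forall>v\<in>set d. v < z")
  case True then show ?thesis by simp
next
  case False
  define z' where "z' = Min {v \<in> set d. z < v}"
  have zc: "z' \<in> set d" "z < z'" "\<forall>v\<in>set d. z < v \<longrightarrow> z' \<le> v" using Min_greater[OF False assms] unfolding z'_def by auto
  have "set (hd (col_ins z (d # ds))) = insert z (set d - {z'})"
    using col_ins_Cons_bump[OF False] set_col_replace[OF zc(1)] z'_def by simp
  then show ?thesis using zc by blast
qed

lemma dominates_col_ins_bump:
  assumes xc: "x \<notin> set c" and zc: "z \<in> set c" "x < z" and zcs: "z \<notin> entries cs"
    and hdd: "cs \<noteq> [] \<longrightarrow> dominates c (hd cs)"
  shows "dominates (col_replace z x c) (hd (col_ins z cs))"
proof (cases cs)
  case Nil
  show ?thesis unfolding dominates_def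
  proof
    fix t
    have "count_upto {z} t \<le> count_below (insert x (set c - {z})) t"
    proof (cases "z \<le> t")
      case True
      have "{v \<in> {z}. v \<le> t} = {z}" using True by auto
      hence "count_upto {z} t = 1" by (simp add: count_upto_def)
      moreover have "1 \<le> count_below (insert x (set c - {z})) t"
      proof -
        have "{x} \<subseteq> {v \<in> insert x (set c - {z}). v < t}" using zc(2) True by simp
        hence "card {x} \<le> card {v \<in> insert x (set c - {z}). v < t}" by (intro card_mono) auto
        then show ?thesis unfolding count_below_def by simp
      qed
      ultimately show ?thesis by simp
    next
      case False
      hence "count_upto {z} t = 0" by (simp add: count_upto_def)
      then show ?thesis by simp
    qed
    then show "count_upto (set (hd (col_ins z cs))) t \<le> count_below (set (col_replace z x c)) t" using Nil set_col_replace[OF zc(1)] by simp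
  qed
next
  case (Cons d ds)
  have zd: "z \<notin> set d" using zcs Cons by simp
  have dd: "dominates c d" using hdd Cons by simp
  have "\<forall>t. count_upto (set (hd (col_ins z (d # ds)))) t \<le> count_below (insert x (set c - {z})) t"
    by (rule dominance_after_bump[OF _ _ _ xc zc zd set_hd_col_ins[OF zd]])
       (use dd in \<open>auto simp: dominates_def\<close>)
  then show ?thesis using Cons set_col_replace[OF zc(1)] unfolding dominates_def by simp
qed

lemma wf_tab_col_ins: "wf_tab L \<Longrightarrow> x \<notin> entries L \<Longrightarrow> wf_tab (col_ins x L)"
proof (induction x L rule: col_ins.induct)
  case (1 x) then show ?case by (simp add: wf_tab_Cons)
next
  case (2 x c cs)
  have sc: "sorted_wrt (<) c" and wcs: "wf_tab cs" and disj: "set c \<inter> entries cs = {}"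
    and hdd: "cs \<noteq> [] \<longrightarrow> dominates c (hd cs)" using 2(2) wf_tab_Cons by auto
  have xc: "x \<notin> set c" and xcs: "x \<notin> entries cs" using 2(3) by auto
  show ?case
  proof (cases "\<forall>v\<in>set c. v < x")
    case True
    have s1: "sorted_wrt (<) (c @ [x])" using sc True by (simp add: sorted_wrt_append)
    have "cs \<noteq> [] \<longrightarrow> dominates (c @ [x]) (hd cs)"
    proof
      assume "cs \<noteq> []"
      hence d: "dominates c (hd cs)" using hdd by simp
      show "dominates (c @ [x]) (hd cs)" unfolding dominates_def
      proof
        fix t
        have "count_below (set c) t \<le> count_below (set (c @ [x])) t" using count_below_insert[of "set c" x t] xc by simp
        then show "count_upto (set (hd cs)) t \<le> count_below (set (c @ [x])) t" using d unfolding dominates_def by (meson le_trans)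
      qed
    qed
    then show ?thesis using True s1 wcs disj xcs by (simp add: wf_tab_Cons)
  next
    case False
    define z where "z = Min {v \<in> set c. x < v}"
    have zc: "z \<in> set c" "x < z" "\<forall>v\<in>set c. x < v \<longrightarrow> z \<le> v" using Min_greater[OF False xc] unfolding z_def by auto
    have eq: "col_ins x (c # cs) = col_replace z x c # col_ins z cs" using col_ins_Cons_bump[OF False] z_def by simp
    have zcs: "z \<notin> entries cs" using disj zc by auto
    have IH: "wf_tab (col_ins z cs)" using 2(1)[OF False z_def wcs zcs] .
    have sr: "sorted_wrt (<) (col_replace z x c)"
    proof (rule sorted_col_replace[OF sc xc _ zc(1)])
      fix v assume v: "v \<in> set c" "v \<noteq> z"
      show "(v < z) = (v < x)"
      proof
        assume "v < z"
        show "v < x"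
        proof (rule ccontr)
          assume "\<not> v < x"
          hence "x < v" using v xc by (metis le_neq_implies_less not_le)
          then show False using zc(3) v \<open>v < z\<close> by fastforce
        qed
      next
        assume "v < x" then show "v < z" using zc(2) by simp
      qed
    qed
    have setr: "set (col_replace z x c) = insert x (set c - {z})" using set_col_replace[OF zc(1)] .
    have dcs: "distinct (concat cs)" using wcs wf_tab_distinct by blast
    have ent2: "entries (col_ins z cs) = insert z (entries cs)" using entries_col_ins[OF dcs zcs] .
    have disj2: "set (col_replace z x c) \<inter> entries (col_ins z cs) = {}" using setr ent2 disj xcs zc(2) by auto
    have dm: "dominates (col_replace z x c) (hd (col_ins z cs))"
      using dominates_col_ins_bump[OF xc zc(1,2) zcs] hdd .
    show ?thesis using eq sr IH disj2 dm by (simp add: wf_tab_Cons)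
  qed
qed

section \<open>Insertion words and reading words\<close>

definition precedes :: "nat list \<Rightarrow> nat \<Rightarrow> nat \<Rightarrow> bool" where
  "precedes u a b \<longleftrightarrow> (\<exists>u1 u2. u = u1 @ u2 \<and> a \<in> set u1 \<and> b \<in> set u2)"

lemma precedes_Nil[simp]: "\<not> precedes [] a b" by (simp add: precedes_def)

lemma precedes_snoc: "precedes (u @ [y]) a b \<longleftrightarrow> precedes u a b \<or> (a \<in> set u \<and> b = y)"
proof
  assume "precedes (u @ [y]) a b"
  then obtain u1 u2 where h: "u @ [y] = u1 @ u2" "a \<in> set u1" "b \<in> set u2" by (auto simp: precedes_def)
  show "precedes u a b \<or> (a \<in> set u \<and> b = y)"
  proof (cases u2 rule: rev_cases)
    case Nil then show ?thesis using h by simp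
  next
    case (snoc u2' y')
    hence "u = u1 @ u2'" "y' = y" using h(1) by auto
    then show ?thesis using h snoc unfolding precedes_def by auto
  qed
next
  assume "precedes u a b \<or> (a \<in> set u \<and> b = y)"
  then show "precedes (u @ [y]) a b"
  proof
    assume "precedes u a b"
    then obtain u1 u2 where h: "u = u1 @ u2" "a \<in> set u1" "b \<in> set u2" by (auto simp: precedes_def)
    then show ?thesis unfolding precedes_def by (rule_tac x=u1 in exI, rule_tac x="u2 @ [y]" in exI) auto
  next
    assume "a \<in> set u \<and> b = y"
    then show ?thesis unfolding precedes_def by (rule_tac x=u in exI, rule_tac x="[y]" in exI) auto
  qed
qed

lemma precedes_set: "precedes u a b \<Longrightarrow> a \<in> set u \<and> b \<in> set u"
  by (auto simp: precedes_def)

lemma precedes_append: "precedes (X @ Y) a b \<longleftrightarrow> precedes X a b \<or> precedes Y a b \<or> (a \<in> set X \<and> b \<in> set Y)"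
proof (induction Y rule: rev_induct)
  case Nil then show ?case by (auto dest: precedes_set)
next
  case (snoc y Y)
  have "precedes (X @ Y @ [y]) a b = (precedes (X @ Y) a b \<or> (a \<in> set (X @ Y) \<and> b = y))"
    using precedes_snoc[of "X @ Y" y a b] by simp
  also have "\<dots> = (precedes X a b \<or> precedes (Y @ [y]) a b \<or> (a \<in> set X \<and> b \<in> set (Y @ [y])))"
    using snoc precedes_snoc[of Y y a b] by auto
  finally show ?case by simp
qed

lemma precedes_sorted: "precedes u a b \<Longrightarrow> sorted_wrt (<) u \<Longrightarrow> a < b"
  by (auto simp: precedes_def sorted_wrt_append)

lemma precedes_rev: "precedes (rev u) a b \<Longrightarrow> precedes u b a"
proof -
  assume "precedes (rev u) a b"
  then obtain u1 u2 where h: "rev u = u1 @ u2" "a \<in> set u1" "b \<in> set u2" by (auto simp: precedes_def)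
  hence "u = rev u2 @ rev u1" by (metis rev_append rev_rev_ident)
  then show ?thesis using h unfolding precedes_def by (rule_tac x="rev u2" in exI, rule_tac x="rev u1" in exI) auto
qed

abbreviation col_ins_word :: "nat list list \<Rightarrow> nat list \<Rightarrow> nat list list" where
  "col_ins_word S u \<equiv> foldl (\<lambda>S x. col_ins x S) S u"

lemma col_ins_word_entries:
  assumes "distinct (concat S)" "distinct u" "set u \<inter> entries S = {}"
  shows "entries (col_ins_word S u) = entries S \<union> set u \<and> distinct (concat (col_ins_word S u))"
  using assms
proof (induction u rule: rev_induct)
  case Nil then show ?case by simp
next
  case (snoc y u)
  have IH: "entries (col_ins_word S u) = entries S \<union> set u" "distinct (concat (col_ins_word S u))" using snoc by auto
  have "y \<notin> entries (col_ins_word S u)" using IH snoc.prems by auto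
  then show ?case using IH entries_col_ins distinct_col_ins by auto
qed

lemma wf_tab_col_ins_word:
  assumes "wf_tab S" "distinct u" "set u \<inter> entries S = {}"
  shows "wf_tab (col_ins_word S u)"
  using assms
proof (induction u rule: rev_induct)
  case Nil then show ?case by simp
next
  case (snoc y u)
  have IH: "wf_tab (col_ins_word S u)" using snoc by auto
  have "entries (col_ins_word S u) = entries S \<union> set u" using col_ins_word_entries[of S u] snoc.prems wf_tab_distinct by auto
  hence "y \<notin> entries (col_ins_word S u)" using snoc.prems by auto
  then show ?case using IH wf_tab_col_ins by simp
qed

lemma col_desc_col_ins_word:
  assumes "distinct (concat S)" "distinct u" "set u \<inter> entries S = {}"
    "k \<in> entries S \<union> set u" "Suc k \<in> entries S \<union> set u"
  shows "col_desc (col_ins_word S u) k \<longleftrightarrow>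
    (if k \<in> entries S \<and> Suc k \<in> entries S then col_desc S k
     else if k \<in> entries S then True else if Suc k \<in> entries S then False else precedes u k (Suc k))"
  using assms
proof (induction u rule: rev_induct)
  case Nil then show ?case by simp
next
  case (snoc y u)
  have ent: "entries (col_ins_word S u) = entries S \<union> set u"
    and dist: "distinct (concat (col_ins_word S u))"
    using col_ins_word_entries[of S u] snoc.prems by auto
  have yF: "y \<notin> entries (col_ins_word S u)" using ent snoc.prems by auto
  have yu: "y \<notin> set u" using snoc.prems by simp
  have eq: "col_ins_word S (u @ [y]) = col_ins y (col_ins_word S u)" by simp
  consider "y \<noteq> k \<and> y \<noteq> Suc k" | "y = Suc k" | "y = k" by blast
  then show ?case
  proof cases
    case 1
    have ku: "k \<in> entries S \<union> set u" "Suc k \<in> entries S \<union> set u" using snoc.prems 1 by auto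
    have "col_desc (col_ins y (col_ins_word S u)) k = col_desc (col_ins_word S u) k"
      using col_desc_col_ins[OF dist yF] ku ent 1 by auto
    moreover have "precedes (u @ [y]) k (Suc k) = precedes u k (Suc k)" using precedes_snoc 1 by auto
    ultimately show ?thesis using eq snoc.IH snoc.prems ku by simp
  next
    case 2
    have "col_desc (col_ins y (col_ins_word S u)) k" using col_desc_col_ins_Suc yF 2 by simp
    moreover have "Suc k \<notin> entries S" using snoc.prems 2 by auto
    moreover have "k \<in> entries S \<or> (k \<in> set u)" using snoc.prems 2 by auto
    ultimately show ?thesis using eq precedes_snoc[of u y k "Suc k"] 2 by auto
  next
    case 3
    have "Suc k \<in> entries (col_ins_word S u)" using snoc.prems 3 ent by auto
    hence "\<not> col_desc (col_ins y (col_ins_word S u)) k"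
      using not_col_desc_col_ins_pred[OF dist] yF 3 by simp
    moreover have "k \<notin> entries S" using snoc.prems 3 by auto
    moreover have "\<not> precedes (u @ [y]) k (Suc k)"
      using precedes_snoc[of u y k "Suc k"] 3 yu precedes_set by auto
    ultimately show ?thesis using eq 3 by auto
  qed
qed

definition reading_word :: "nat list list \<Rightarrow> nat list" where
  "reading_word L = concat (map rev L)"

lemma set_reading_word: "set (reading_word L) = entries L"
  by (auto simp: reading_word_def tab_entries_def)

lemma distinct_reading_word: "distinct (reading_word L) \<longleftrightarrow> distinct (concat L)"
proof (induction L)
  case Nil then show ?case by (simp add: reading_word_def)
next
  case (Cons c L)
  have "set (concat (map rev L)) = set (concat L)" by auto
  then show ?case using Cons by (auto simp: reading_word_def)
qed

lemma precedes_reading_word: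
  assumes "\<forall>c\<in>set L. sorted_wrt (<) c" "distinct (concat L)" "a < b" "a \<in> entries L" "b \<in> entries L"
  shows "precedes (reading_word L) a b \<longleftrightarrow> col_of a L < col_of b L"
  unfolding reading_word_def using assms
proof (induction L)
  case Nil then show ?case by simp
next
  case (Cons c cs)
  have sc: "sorted_wrt (<) c" using Cons by simp
  have disj: "set c \<inter> entries cs = {}" using Cons.prems(2) by (auto simp: tab_entries_def)
  have e: "set (concat (map rev cs)) = entries cs" by (auto simp: tab_entries_def)
  have ba: "precedes (concat (map rev (c # cs))) a b \<longleftrightarrow>
     precedes (rev c) a b \<or> precedes (concat (map rev cs)) a b \<or> (a \<in> set c \<and> b \<in> entries cs)"
    using precedes_append[of "rev c" "concat (map rev cs)" a b] e by (simp add: tab_entries_def)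
  have nrc: "\<not> precedes (rev c) a b" using precedes_rev precedes_sorted sc Cons.prems(3) by fastforce
  consider "a \<in> set c \<and> b \<in> set c" | "a \<in> set c \<and> b \<notin> set c" | "a \<notin> set c \<and> b \<in> set c" | "a \<notin> set c \<and> b \<notin> set c" by blast
  then show ?case
  proof cases
    case 1
    have "\<not> precedes (concat (map rev cs)) a b" using precedes_set e disj 1 by blast
    then show ?thesis using ba nrc 1 disj by auto
  next
    case 2
    then show ?thesis using ba Cons.prems by auto
  next
    case 3
    have "\<not> precedes (concat (map rev cs)) a b" using precedes_set e disj 3 by blast
    then show ?thesis using ba nrc 3 by auto
  next
    case 4
    have IH: "precedes (concat (map rev cs)) a b \<longleftrightarrow> col_of a cs < col_of b cs"
      using Cons 4 by auto
    then show ?thesis using ba nrc 4 by auto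
  qed
qed

lemma precedes_map_sorted:
  assumes s: "sorted_wrt (<) s" and state_inv: "\<And>a. a \<in> set s \<Longrightarrow> f a \<in> set s \<and> f (f a) = a"
    and k: "k \<in> set s" and sk: "k' \<in> set s" and kk: "k \<noteq> k'"
  shows "precedes (map f s) k k' \<longleftrightarrow> f k < f k'"
proof
  assume "precedes (map f s) k k'"
  then obtain u1 u2 where h: "map f s = u1 @ u2" "k \<in> set u1" "k' \<in> set u2" by (auto simp: precedes_def)
  then obtain s1 s2 where ss: "s = s1 @ s2" "map f s1 = u1" "map f s2 = u2" by (metis map_eq_append_conv)
  obtain a where a: "a \<in> set s1" "k = f a" using h(2) ss by auto
  obtain b where b: "b \<in> set s2" "k' = f b" using h(3) ss by auto
  have "f k = a" using state_inv[of a] a ss by auto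
  moreover have "f k' = b" using state_inv[of b] b ss by auto
  ultimately show "f k < f k'" using s ss a b by (auto simp: sorted_wrt_append)
next
  assume lt: "f k < f k'"
  have fk: "f k \<in> set s" using state_inv k by blast
  then obtain s1 s2 where ss: "s = s1 @ f k # s2" by (meson split_list)
  have fk': "f k' \<in> set s" using state_inv sk by blast
  have "f k' \<notin> set s1" using s ss lt by (auto simp: sorted_wrt_append)
  hence "f k' \<in> set s2" using fk' ss lt by auto
  moreover have "f (f k) = k" "f (f k') = k'" using state_inv k sk by auto
  ultimately show "precedes (map f s) k k'" unfolding precedes_def
    by (rule_tac x="map f (s1 @ [f k])" in exI, rule_tac x="map f s2" in exI) (auto simp: ss intro: image_eqI[where x="f k'"])
qed

section \<open>Column deletion\<close>

text \<open>bump_left y R only does what column deletion intends when every column contains an entry below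
  the letter bumped into it; otherwise Max of the empty set is taken.\<close>

fun bumpable :: "nat \<Rightarrow> nat list list \<Rightarrow> bool" where
  "bumpable y [] = True"
| "bumpable y (c # cs) = ((\<exists>v\<in>set c. v < y) \<and> bumpable (Max {v \<in> set c. v < y}) cs)"

lemma Max_less:
  assumes "\<exists>v\<in>set c. v < (y::nat)"
  shows "Max {v \<in> set c. v < y} \<in> set c" "Max {v \<in> set c. v < y} < y"
    "\<And>v. v \<in> set c \<Longrightarrow> v < y \<Longrightarrow> v \<le> Max {v \<in> set c. v < y}"
proof -
  have ne: "{v \<in> set c. v < y} \<noteq> {}" using assms by auto
  have f: "finite {v \<in> set c. v < y}" by simp
  show "Max {v \<in> set c. v < y} \<in> set c" "Max {v \<in> set c. v < y} < y"
    using Max_in[OF f ne] by auto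
  show "\<And>v. v \<in> set c \<Longrightarrow> v < y \<Longrightarrow> v \<le> Max {v \<in> set c. v < y}" using f by auto
qed

lemma bump_left_Cons: "bump_left y (c # cs) =
  (fst (bump_left (Max {v \<in> set c. v < y}) cs), col_replace (Max {v \<in> set c. v < y}) y c # snd (bump_left (Max {v \<in> set c. v < y}) cs))"
  by (simp add: Let_def col_replace_def split: prod.splits)

lemma bump_left_props:
  assumes "bumpable y R" "distinct (concat R)" "y \<notin> entries R"
  shows "length (snd (bump_left y R)) = length R \<and>
    entries (snd (bump_left y R)) = insert y (entries R) - {fst (bump_left y R)} \<and>
    fst (bump_left y R) \<in> insert y (entries R) \<and>
    distinct (concat (snd (bump_left y R))) \<and> fst (bump_left y R) \<le> y \<and>
    (R \<noteq> [] \<longrightarrow> fst (bump_left y R) < y)"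
  using assms
proof (induction y R rule: bump_left.induct)
  case (1 y) then show ?case by simp
next
  case (2 y c cs)
  define z where "z = Max {v \<in> set c. v < y}"
  have ex: "\<exists>v\<in>set c. v < y" using 2 by simp
  have zc: "z \<in> set c" "z < y" "\<And>v. v \<in> set c \<Longrightarrow> v < y \<Longrightarrow> v \<le> z" using Max_less[OF ex] z_def by auto
  have vb': "bumpable z cs" using 2(2) z_def by simp
  have dc: "distinct c" "distinct (concat cs)" "set c \<inter> entries cs = {}" using 2(3) by (auto simp: tab_entries_def)
  have yc: "y \<notin> set c" "y \<notin> entries cs" using 2(4) by auto
  have zcs: "z \<notin> entries cs" using dc zc by auto
  obtain x ls where bl: "bump_left z cs = (x, ls)" by (metis surj_pair)
  have IH: "length ls = length cs \<and> entries ls = insert z (entries cs) - {x} \<and> x \<in> insert z (entries cs) \<and>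
     distinct (concat ls) \<and> x \<le> z"
    using 2(1)[OF z_def vb' dc(2) zcs] bl by (simp add: z_def)
  have eq: "bump_left y (c # cs) = (x, col_replace z y c # ls)" using bump_left_Cons[of y c cs] bl z_def by simp
  have sr: "set (col_replace z y c) = insert y (set c - {z})" using set_col_replace[OF zc(1)] .
  have dr: "distinct (col_replace z y c)" using distinct_col_replace dc yc by blast
  have xz: "x \<le> z" using IH by simp
  have "set (col_replace z y c) \<inter> entries ls = {}" using sr IH dc yc zc by auto
  moreover have "entries (col_replace z y c # ls) = insert y (entries (c # cs)) - {x}"
    using sr IH dc yc zc xz by auto
  ultimately show ?case using eq IH dr zc xz by (auto simp: tab_entries_def)
qed

text \<open>Column positions, counted leftwards, before and after bump_left y R; the bumped letter y
  sits at -1, just right of R, and the output sits just beyond the last column of R.\<close>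

definition rcol_before :: "nat \<Rightarrow> nat list list \<Rightarrow> nat \<Rightarrow> int" where
  "rcol_before y R v = (if v = y then -1 else int (col_of v R))"
definition rcol_after :: "nat \<Rightarrow> nat list list \<Rightarrow> nat \<Rightarrow> int" where
  "rcol_after y R v = (if v = fst (bump_left y R) then int (length R) else int (col_of v (snd (bump_left y R))))"

lemma rcol_after_nonneg: "0 \<le> rcol_after y R v"
  by (simp add: rcol_after_def)

lemma rcol_before_ge: "-1 \<le> rcol_before y R v"
  by (simp add: rcol_before_def)

lemma rcol_bump_step:
  assumes vb: "bumpable y (c # cs)" and dist: "distinct (concat (c # cs))" and yR: "y \<notin> entries (c # cs)"
  defines "z \<equiv> Max {v \<in> set c. v < y}"
  shows rcol_after_shift: "\<And>v. v \<in> insert z (entries cs) \<Longrightarrow> rcol_after y (c # cs) v = 1 + rcol_after z cs v"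
    and rcol_before_shift: "\<And>v. v \<in> insert z (entries cs) \<Longrightarrow> rcol_before y (c # cs) v = 1 + rcol_before z cs v"
    and "\<And>v. v \<in> set c \<Longrightarrow> v \<noteq> z \<Longrightarrow> rcol_after y (c # cs) v = 0"
    and "rcol_after y (c # cs) y = 0"
    and "\<And>v. v \<in> set c \<Longrightarrow> rcol_before y (c # cs) v = 0"
    and "\<And>v. v \<in> entries cs \<Longrightarrow> 1 \<le> rcol_before y (c # cs) v"
    and "\<And>v. v \<in> entries cs \<Longrightarrow> 1 \<le> rcol_after y (c # cs) v"
proof -
  have ex: "\<exists>v\<in>set c. v < y" using vb by simp
  have zc: "z \<in> set c" "z < y" using Max_less[OF ex] z_def by auto
  have vb': "bumpable z cs" using vb z_def by simp
  have dc: "distinct (concat cs)" "set c \<inter> entries cs = {}" using dist by (auto simp: tab_entries_def)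
  have yc: "y \<notin> set c" "y \<notin> entries cs" using yR by auto
  have zcs: "z \<notin> entries cs" using dc zc by auto
  obtain x ls where bl: "bump_left z cs = (x, ls)" by (metis surj_pair)
  have ls: "entries ls = insert z (entries cs) - {x}" "x \<in> insert z (entries cs)"
    using bump_left_props[OF vb' dc(1) zcs] bl by simp_all
  have eq: "bump_left y (c # cs) = (x, col_replace z y c # ls)"
    using bump_left_Cons[of y c cs] bl z_def by simp
  have sr: "\<And>v. v \<in> set (col_replace z y c) \<longleftrightarrow> v = y \<or> (v \<in> set c \<and> v \<noteq> z)"
    using set_col_replace[OF zc(1)] by auto
  have after: "\<And>v. rcol_after y (c # cs) v = (if v = x then int (Suc (length cs))
      else if v \<in> set (col_replace z y c) then 0 else 1 + int (col_of v ls))"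
    unfolding rcol_after_def using eq by simp
  have after_cs: "\<And>v. rcol_after z cs v = (if v = x then int (length cs) else int (col_of v ls))"
    unfolding rcol_after_def using bl by simp
  have before: "\<And>v. rcol_before y (c # cs) v = (if v = y then -1 else if v \<in> set c then 0 else 1 + int (col_of v cs))"
    unfolding rcol_before_def by simp
  have before_cs: "\<And>v. rcol_before z cs v = (if v = z then -1 else int (col_of v cs))"
    unfolding rcol_before_def by simp
  have xrep: "x \<notin> set (col_replace z y c)" using sr ls zc dc yc by auto
  show shift: "rcol_after y (c # cs) v = 1 + rcol_after z cs v" if v: "v \<in> insert z (entries cs)" for v
  proof -
    have "v \<notin> set (col_replace z y c)" using v sr dc zc yc by auto
    then show ?thesis using after after_cs by auto
  qed
  show "rcol_before y (c # cs) v = 1 + rcol_before z cs v" if v: "v \<in> insert z (entries cs)" for v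
  proof (cases "v = z")
    case True then show ?thesis using before before_cs zc by auto
  next
    case False
    hence "v \<in> entries cs" "v \<noteq> y" using v yc by auto
    then show ?thesis using before before_cs dc False by auto
  qed
  show "\<And>v. v \<in> set c \<Longrightarrow> v \<noteq> z \<Longrightarrow> rcol_after y (c # cs) v = 0" using after sr xrep by auto
  show "rcol_after y (c # cs) y = 0" using after sr xrep by auto
  show "\<And>v. v \<in> set c \<Longrightarrow> rcol_before y (c # cs) v = 0" using before yc by auto
  show "\<And>v. v \<in> entries cs \<Longrightarrow> 1 \<le> rcol_before y (c # cs) v" using before yc dc by auto
  show "\<And>v. v \<in> entries cs \<Longrightarrow> 1 \<le> rcol_after y (c # cs) v" using shift rcol_after_nonneg by fastforce
qed

lemma bump_left_rcol_order:
  assumes "bumpable y R" "distinct (concat R)" "y \<notin> entries R"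
    "k \<in> insert y (entries R)" "Suc k \<in> insert y (entries R)"
  shows "(rcol_after y R k \<le> rcol_after y R (Suc k)) \<longleftrightarrow> (rcol_before y R k \<le> rcol_before y R (Suc k))"
  using assms
proof (induction y R rule: bump_left.induct)
  case (1 y) then show ?case by simp
next
  case (2 y c cs)
  define z where "z = Max {v \<in> set c. v < y}"
  have ex: "\<exists>v\<in>set c. v < y" using 2 by simp
  have zc: "z \<in> set c" "z < y" "\<And>v. v \<in> set c \<Longrightarrow> v < y \<Longrightarrow> v \<le> z" using Max_less[OF ex] z_def by auto
  have vb': "bumpable z cs" using 2(2) z_def by simp
  have dc: "distinct (concat cs)" "set c \<inter> entries cs = {}" using 2(3) by (auto simp: tab_entries_def)
  have zcs: "z \<notin> entries cs" using dc zc by auto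
  have IH: "\<lbrakk>k \<in> insert z (entries cs); Suc k \<in> insert z (entries cs)\<rbrakk> \<Longrightarrow>
      (rcol_after z cs k \<le> rcol_after z cs (Suc k)) \<longleftrightarrow> (rcol_before z cs k \<le> rcol_before z cs (Suc k))"
    using 2(1)[OF z_def vb' dc(1) zcs] by (simp add: z_def)
  note shift_a = rcol_after_shift[OF 2(2,3,4), folded z_def]
    and shift_b = rcol_before_shift[OF 2(2,3,4), folded z_def]
    and a_c = rcol_bump_step(3)[OF 2(2,3,4), folded z_def]
    and a_y = rcol_bump_step(4)[OF 2(2,3,4)]
    and b_c = rcol_bump_step(5)[OF 2(2,3,4)]
    and b_cs = rcol_bump_step(6)[OF 2(2,3,4)]
    and a_cs = rcol_bump_step(7)[OF 2(2,3,4)]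
    and nonneg = rcol_after_nonneg[of y "c # cs"]
  have ibC: "\<And>v. rcol_before y (c # cs) v = (if v = y then -1 else if v \<in> set c then 0 else 1 + int (col_of v cs))"
    and ibcs: "\<And>v. rcol_before z cs v = (if v = z then -1 else int (col_of v cs))"
    unfolding rcol_before_def by simp_all
  have kin: "k \<in> insert y (set c \<union> entries cs)" "Suc k \<in> insert y (set c \<union> entries cs)" using 2(5,6) by auto
  show ?case
  proof (cases "k = y")
    case True
    hence "rcol_before y (c # cs) k = -1" using ibC by simp
    moreover have "rcol_before y (c # cs) (Suc k) \<ge> 0" using ibC True by simp
    ultimately show ?thesis using a_y True nonneg by simp
  next
    case kny: False
    show ?thesis
    proof (cases "Suc k = y")
      case True
      hence b1: "rcol_before y (c # cs) (Suc k) = -1" using ibC by simp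
      have b2: "rcol_before y (c # cs) k \<ge> 0" using ibC kny by simp
      have "1 \<le> rcol_after y (c # cs) k"
      proof (cases "k \<in> set c")
        case True
        have "k \<le> z" using zc(3)[OF True] \<open>Suc k = y\<close> by simp
        hence "z = k" using zc(2) \<open>Suc k = y\<close> by simp
        then show ?thesis using shift_a[of k] rcol_after_nonneg[of z cs k] by simp
      next
        case False
        hence "k \<in> entries cs" using kin kny by simp
        then show ?thesis using a_cs by simp
      qed
      then show ?thesis using True a_y b1 b2 by simp
    next
      case skny: False
      have kk: "k \<in> set c \<union> entries cs" "Suc k \<in> set c \<union> entries cs" using kin kny skny by auto
      consider "k \<in> set c \<and> Suc k \<in> set c" | "k \<in> set c \<and> Suc k \<in> entries cs" | "k \<in> entries cs \<and> Suc k \<in> set c"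
        | "k \<in> entries cs \<and> Suc k \<in> entries cs" using kk by blast
      then show ?thesis
      proof cases
        case 1
        have "z \<noteq> k"
        proof
          assume "z = k"
          have "\<not> Suc k < y" using zc(3)[of "Suc k"] 1 \<open>z = k\<close> by auto
          then show False using zc(2) \<open>z = k\<close> skny by simp
        qed
        hence "rcol_after y (c # cs) k = 0" using a_c 1 by simp
        then show ?thesis using b_c 1 nonneg by simp
      next
        case 2
        have b: "rcol_before y (c # cs) k \<le> rcol_before y (c # cs) (Suc k)" using b_c[of k] b_cs[of "Suc k"] 2 by simp
        have "rcol_after y (c # cs) k \<le> rcol_after y (c # cs) (Suc k)"
        proof (cases "z = k")
          case True
          have "(rcol_after z cs k \<le> rcol_after z cs (Suc k)) \<longleftrightarrow> (rcol_before z cs k \<le> rcol_before z cs (Suc k))" using IH 2 True by simp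
          moreover have "rcol_before z cs k \<le> rcol_before z cs (Suc k)" using ibcs True by simp
          ultimately show ?thesis using shift_a 2 True by simp
        next
          case False
          then show ?thesis using a_c 2 nonneg by simp
        qed
        then show ?thesis using b by simp
      next
        case 3
        have b: "\<not> rcol_before y (c # cs) k \<le> rcol_before y (c # cs) (Suc k)" using b_c b_cs 3 by fastforce
        have "\<not> rcol_after y (c # cs) k \<le> rcol_after y (c # cs) (Suc k)"
        proof (cases "z = Suc k")
          case True
          have "(rcol_after z cs k \<le> rcol_after z cs (Suc k)) \<longleftrightarrow> (rcol_before z cs k \<le> rcol_before z cs (Suc k))" using IH 3 True by simp
          moreover have "\<not> rcol_before z cs k \<le> rcol_before z cs (Suc k)" using ibcs True 3 zcs by auto
          ultimately show ?thesis using shift_a 3 True by simp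
        next
          case False
          then show ?thesis using a_c 3 a_cs by fastforce
        qed
        then show ?thesis using b by simp
      next
        case 4
        have "k \<in> insert z (entries cs)" "Suc k \<in> insert z (entries cs)" using 4 by auto
        then show ?thesis using IH shift_a shift_b by simp
      qed
    qed
  qed
qed

lemma distinct_rev_concat: "distinct (concat (rev L)) \<longleftrightarrow> distinct (concat L)"
proof (induction L)
  case Nil then show ?case by simp
next
  case (Cons c L)
  have "set (concat (rev L)) = set (concat L)" by simp
  then show ?case using Cons by auto
qed

lemma wf_tab_append: "wf_tab (X @ Y) \<longleftrightarrow> wf_tab X \<and> wf_tab Y \<and> entries X \<inter> entries Y = {} \<and> (X \<noteq> [] \<and> Y \<noteq> [] \<longrightarrow> dominates (last X) (hd Y))"
proof (induction X)
  case Nil then show ?case by simp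
next
  case (Cons c X)
  show ?case
  proof (cases X)
    case Nil
    then show ?thesis using wf_tab_Cons[of c Y] by (auto simp: wf_tab_Cons)
  next
    case (Cons d X')
    have "wf_tab ((c # X) @ Y) = (sorted_wrt (<) c \<and> wf_tab (X @ Y) \<and> set c \<inter> entries (X @ Y) = {} \<and> dominates c (hd (X @ Y)))"
      using wf_tab_Cons[of c "X @ Y"] Cons by simp
    also have "\<dots> = (sorted_wrt (<) c \<and> (wf_tab X \<and> wf_tab Y \<and> entries X \<inter> entries Y = {} \<and> (X \<noteq> [] \<and> Y \<noteq> [] \<longrightarrow> dominates (last X) (hd Y)))
       \<and> set c \<inter> entries (X @ Y) = {} \<and> dominates c (hd X))" using Cons.IH Cons by simp
    also have "\<dots> = (wf_tab (c # X) \<and> wf_tab Y \<and> entries (c # X) \<inter> entries Y = {} \<and> (c # X \<noteq> [] \<and> Y \<noteq> [] \<longrightarrow> dominates (last (c # X)) (hd Y)))"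
      using wf_tab_Cons[of c X] Cons by auto
    finally show ?thesis .
  qed
qed

lemma wf_tab_rev_Cons: "wf_tab (rev (c # cs)) \<longleftrightarrow> wf_tab (rev cs) \<and> sorted_wrt (<) c \<and> set c \<inter> entries cs = {} \<and> (cs \<noteq> [] \<longrightarrow> dominates (hd cs) c)"
proof -
  have "entries (rev cs) = entries cs" by (simp add: tab_entries_def)
  moreover have "cs \<noteq> [] \<Longrightarrow> last (rev cs) = hd cs" by (simp add: last_rev)
  ultimately show ?thesis using wf_tab_append[of "rev cs" "[c]"] wf_tab_Cons[of c "[]"] by auto
qed

lemma dominance_after_unbump:
  fixes A B B' :: "nat set"
  assumes fA: "finite A" and fB: "finite B"
    and dm: "\<forall>t. count_upto B t \<le> count_below A t"
    and yB: "y \<in> B" and zA: "z \<in> A" and zy: "z < y" and zmax: "\<forall>v\<in>A. v < y \<longrightarrow> v \<le> z" and y_notin_A: "y \<notin> A"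
    and Bc: "B' = B - {y} \<or> (\<exists>w. B' = insert w (B - {y}) \<and> y < w \<and> w \<notin> B)"
  shows "\<forall>t. count_upto B' t \<le> count_below (insert y (A - {z})) t"
proof
  fix t
  have fA': "finite (A - {z})" using fA by simp
  have cA: "count_below (insert y (A - {z})) t = count_below (A - {z}) t + (if y < t then 1 else 0)"
    using count_below_insert[OF fA', of y t] y_notin_A by simp
  have cA2: "count_below (A - {z}) t + (if z < t then 1 else 0) = count_below A t" using count_below_remove[OF fA zA] by simp
  have cB2: "count_upto (B - {y}) t + (if y \<le> t then 1 else 0) = count_upto B t" using count_upto_remove[OF fB yB] by simp
  have cB': "count_upto B' t \<le> count_upto (B - {y}) t + (if y < t then 1 else 0)"
    using Bc
  proof
    assume "B' = B - {y}" then show ?thesis by simp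
  next
    assume "\<exists>w. B' = insert w (B - {y}) \<and> y < w \<and> w \<notin> B"
    then obtain w where h: "B' = insert w (B - {y})" "y < w" "w \<notin> B" by blast
    have "count_upto B' t = count_upto (B - {y}) t + (if w \<le> t then 1 else 0)" using count_upto_insert[of "B - {y}" w t] fB h by simp
    then show ?thesis using h(2) by auto
  qed
  have dt: "count_upto B t \<le> count_below A t" using dm by blast
  show "count_upto B' t \<le> count_below (insert y (A - {z})) t"
  proof (cases "t \<le> z")
    case True
    then show ?thesis using cA cA2 cB2 cB' dt zy by auto
  next
    case False
    show ?thesis
    proof (cases "t < y")
      case True
      have g: "count_below A y = count_below A t"
        by (rule count_below_gap) (use zmax False True in \<open>auto simp: not_le\<close>)
      have "count_upto B t \<le> count_below B y" using count_upto_le_count_below[OF fB True] .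
      moreover have "count_upto B y = count_below B y + 1" using count_upto_eq_count_below[OF fB, of y] yB by simp
      moreover have "count_upto B y \<le> count_below A y" using dm by blast
      ultimately show ?thesis using cA cA2 cB2 cB' g False True by simp
    next
      case False
      then show ?thesis using cA cA2 cB2 cB' dt \<open>\<not> t \<le> z\<close> by (cases "t = y") auto
    qed
  qed
qed

lemma wf_tab_bump_left:
  assumes "bumpable y R" "wf_tab (rev R)" "y \<notin> entries R" "y \<in> B" "finite B"
    "R \<noteq> [] \<longrightarrow> (\<forall>t. count_upto B t \<le> count_below (set (hd R)) t)"
    "B' = B - {y} \<or> (\<exists>w. B' = insert w (B - {y}) \<and> y < w \<and> w \<notin> B)"
  shows "wf_tab (rev (snd (bump_left y R))) \<and> (R \<noteq> [] \<longrightarrow> (\<forall>t. count_upto B' t \<le> count_below (set (hd (snd (bump_left y R)))) t))"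
  using assms
proof (induction y R arbitrary: B B' rule: bump_left.induct)
  case (1 y) then show ?case by simp
next
  case (2 y c cs)
  define z where "z = Max {v \<in> set c. v < y}"
  have ex: "\<exists>v\<in>set c. v < y" using 2 by simp
  have zc: "z \<in> set c" "z < y" "\<And>v. v \<in> set c \<Longrightarrow> v < y \<Longrightarrow> v \<le> z" using Max_less[OF ex] z_def by auto
  have vb': "bumpable z cs" using 2(2) z_def by simp
  have wr: "wf_tab (rev cs)" "sorted_wrt (<) c" "set c \<inter> entries cs = {}" "cs \<noteq> [] \<longrightarrow> dominates (hd cs) c"
    using 2(3) wf_tab_rev_Cons by auto
  have yc: "y \<notin> set c" "y \<notin> entries cs" using 2(4) by auto
  have zcs: "z \<notin> entries cs" using wr zc by auto
  obtain x ls where bl: "bump_left z cs = (x, ls)" by (metis surj_pair)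
  have eq: "bump_left y (c # cs) = (x, col_replace z y c # ls)" using bump_left_Cons[of y c cs] bl z_def by simp
  have sr: "set (col_replace z y c) = insert y (set c - {z})" using set_col_replace[OF zc(1)] .
  have sorted_r: "sorted_wrt (<) (col_replace z y c)"
  proof (rule sorted_col_replace[OF wr(2) yc(1) _ zc(1)])
    fix v assume v: "v \<in> set c" "v \<noteq> z"
    show "(v < z) = (v < y)"
    proof
      assume "v < z" then show "v < y" using zc(2) by simp
    next
      assume "v < y" then show "v < z" using zc(3)[OF v(1)] v(2) by simp
    qed
  qed
  have Bnew: "set (col_replace z y c) = set c - {z} \<or> (\<exists>w. set (col_replace z y c) = insert w (set c - {z}) \<and> z < w \<and> w \<notin> set c)"
    using sr zc yc by blast
  have dcs: "cs \<noteq> [] \<longrightarrow> (\<forall>t. count_upto (set c) t \<le> count_below (set (hd cs)) t)" using wr(4) unfolding dominates_def by blast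
  have IH: "wf_tab (rev ls) \<and> (cs \<noteq> [] \<longrightarrow> (\<forall>t. count_upto (set (col_replace z y c)) t \<le> count_below (set (hd ls)) t))"
    using 2(1)[OF z_def vb' wr(1) zcs zc(1) _ dcs Bnew] bl by simp
  have pr: "\<forall>t. count_upto B' t \<le> count_below (insert y (set c - {z})) t"
    by (rule dominance_after_unbump[OF _ 2(6) _ 2(5) zc(1) zc(2) _ yc(1) 2(8)]) (use 2(7) zc(3) in auto)
  have bump_props: "entries ls = insert z (entries cs) - {x}" using bump_left_props[OF vb' _ zcs] wr(1) wf_tab_distinct bl
    by (metis (no_types, lifting) distinct_rev_concat fst_conv snd_conv)
  have disj: "set (col_replace z y c) \<inter> entries ls = {}" using sr bump_props wr(3) yc zc by auto
  have lsne: "ls \<noteq> [] \<longrightarrow> dominates (hd ls) (col_replace z y c)" using IH bump_left_props[OF vb'] bl unfolding dominates_def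
    by (metis length_0_conv snd_conv wr(1) wf_tab_distinct distinct_rev_concat zcs)
  have "wf_tab (rev (col_replace z y c # ls))" using wf_tab_rev_Cons IH sorted_r disj lsne by blast
  then show ?case using eq pr sr by simp
qed

lemma bumpable_if_wf: "wf_tab (rev R) \<Longrightarrow> (R \<noteq> [] \<longrightarrow> (\<exists>v\<in>set (hd R). v < y)) \<Longrightarrow> bumpable y R"
proof (induction y R rule: bumpable.induct)
  case (1 y) then show ?case by simp
next
  case (2 y c cs)
  define z where "z = Max {v \<in> set c. v < y}"
  have ex: "\<exists>v\<in>set c. v < y" using 2 by simp
  have zc: "z \<in> set c" "z < y" using Max_less[OF ex] z_def by auto
  have wr: "wf_tab (rev cs)" "cs \<noteq> [] \<longrightarrow> dominates (hd cs) c" using 2(2) wf_tab_rev_Cons by auto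
  have "cs \<noteq> [] \<longrightarrow> (\<exists>v\<in>set (hd cs). v < z)"
  proof
    assume ne: "cs \<noteq> []"
    have "count_upto (set c) z \<le> count_below (set (hd cs)) z" using wr(2) ne unfolding dominates_def by blast
    moreover have "1 \<le> count_upto (set c) z"
    proof -
      have "{z} \<subseteq> {v \<in> set c. v \<le> z}" using zc by auto
      hence "card {z} \<le> card {v \<in> set c. v \<le> z}" by (intro card_mono) auto
      then show ?thesis by (simp add: count_upto_def)
    qed
    ultimately have "{v \<in> set (hd cs). v < z} \<noteq> {}" unfolding count_below_def by (metis card.empty not_one_le_zero le_trans)
    then show "\<exists>v\<in>set (hd cs). v < z" by blast
  qed
  then show ?case using 2(1)[OF wr(1)] ex z_def by simp
qed

lemma bump_left_append: "bump_left y (R1 @ R2) =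
  (fst (bump_left (fst (bump_left y R1)) R2), snd (bump_left y R1) @ snd (bump_left (fst (bump_left y R1)) R2))"
  by (induction y R1 rule: bump_left.induct) (simp_all del: bump_left.simps(2) add: bump_left_Cons)

lemma bumpable_append: "bumpable y (R1 @ R2) \<Longrightarrow> bumpable y R1 \<and> bumpable (fst (bump_left y R1)) R2"
  by (induction y R1 rule: bump_left.induct) (simp_all del: bump_left.simps(2) add: bump_left_Cons)

lemma bump_left_twice_below:
  assumes "bumpable y R" "bumpable y' (snd (bump_left y R))" "y' < y" "y \<notin> entries R" "distinct (concat R)"
  shows "fst (bump_left y' (snd (bump_left y R))) < fst (bump_left y R)"
  using assms
proof (induction y R arbitrary: y' rule: bump_left.induct)
  case (1 y) then show ?case by simp
next
  case (2 y c cs)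
  define z where "z = Max {v \<in> set c. v < y}"
  have ex: "\<exists>v\<in>set c. v < y" using 2 by simp
  have zc: "z \<in> set c" "z < y" "\<And>v. v \<in> set c \<Longrightarrow> v < y \<Longrightarrow> v \<le> z" using Max_less[OF ex] z_def by auto
  have vb': "bumpable z cs" using 2(2) z_def by simp
  have dc: "distinct (concat cs)" "set c \<inter> entries cs = {}" using 2(6) by (auto simp: tab_entries_def)
  have yc: "y \<notin> set c" using 2(5) by auto
  have zcs: "z \<notin> entries cs" using dc zc by auto
  obtain x ls where bl: "bump_left z cs = (x, ls)" by (metis surj_pair)
  have eq: "bump_left y (c # cs) = (x, col_replace z y c # ls)" using bump_left_Cons[of y c cs] bl z_def by simp
  define z' where "z' = Max {v \<in> set (col_replace z y c). v < y'}"
  have ex': "\<exists>v\<in>set (col_replace z y c). v < y'" using 2(3) eq by simp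
  have zc': "z' \<in> set (col_replace z y c)" "z' < y'" using Max_less[OF ex'] z'_def by auto
  have "z' \<noteq> y" using zc' 2(4) by simp
  hence "z' \<in> set c" "z' \<noteq> z" using zc' set_col_replace[OF zc(1)] by auto
  hence zz: "z' < z" using zc(3)[of z'] zc' 2(4) by fastforce
  have vb2: "bumpable z' ls" using 2(3) eq z'_def by simp
  have "fst (bump_left z' ls) < x" using 2(1)[OF z_def vb', of z'] bl vb2 zz zcs dc by simp
  moreover have "bump_left y' (col_replace z y c # ls) = (fst (bump_left z' ls), col_replace z' y' (col_replace z y c) # snd (bump_left z' ls))"
    using bump_left_Cons[of y' "col_replace z y c" ls] z'_def by simp
  ultimately show ?case using eq by simp
qed

lemma bump_left_twice_above:
  assumes "bumpable y R" "bumpable y' (snd (bump_left y R))" "y < y'" "y \<notin> entries R" "distinct (concat R)"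
  shows "fst (bump_left y R) < fst (bump_left y' (snd (bump_left y R)))"
  using assms
proof (induction y R arbitrary: y' rule: bump_left.induct)
  case (1 y) then show ?case by simp
next
  case (2 y c cs)
  define z where "z = Max {v \<in> set c. v < y}"
  have ex: "\<exists>v\<in>set c. v < y" using 2 by simp
  have zc: "z \<in> set c" "z < y" "\<And>v. v \<in> set c \<Longrightarrow> v < y \<Longrightarrow> v \<le> z" using Max_less[OF ex] z_def by auto
  have vb': "bumpable z cs" using 2(2) z_def by simp
  have dc: "distinct (concat cs)" "set c \<inter> entries cs = {}" using 2(6) by (auto simp: tab_entries_def)
  have zcs: "z \<notin> entries cs" using dc zc by auto
  obtain x ls where bl: "bump_left z cs = (x, ls)" by (metis surj_pair)
  have eq: "bump_left y (c # cs) = (x, col_replace z y c # ls)" using bump_left_Cons[of y c cs] bl z_def by simp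
  define z' where "z' = Max {v \<in> set (col_replace z y c). v < y'}"
  have ex': "\<exists>v\<in>set (col_replace z y c). v < y'" using 2(3) eq by simp
  have yin: "y \<in> set (col_replace z y c)" using set_col_replace[OF zc(1)] by simp
  have "y \<le> z'" using Max_less(3)[OF ex' yin 2(4)] z'_def by simp
  hence zz: "z < z'" using zc(2) by simp
  have vb2: "bumpable z' ls" using 2(3) eq z'_def by simp
  have "x < fst (bump_left z' ls)" using 2(1)[OF z_def vb', of z'] bl vb2 zz zcs dc by simp
  moreover have "bump_left y' (col_replace z y c # ls) = (fst (bump_left z' ls), col_replace z' y' (col_replace z y c) # snd (bump_left z' ls))"
    using bump_left_Cons[of y' "col_replace z y c" ls] z'_def by simp
  ultimately show ?case using eq by simp
qed

lemma col_of_append: "col_of v (X @ Y) = (if v \<in> entries X then col_of v X else length X + col_of v Y)"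
  by (induction X) auto

lemma col_of_rev: "distinct (concat L) \<Longrightarrow> v \<in> entries L \<Longrightarrow> col_of v (rev L) = length L - 1 - col_of v L"
proof -
  assume d: "distinct (concat L)" and v: "v \<in> entries L"
  have b: "col_of v L < length L" "v \<in> set (L ! col_of v L)" using col_of_bound[OF v] by auto
  have "rev L ! (length L - 1 - col_of v L) = L ! col_of v L" using b(1) by (simp add: rev_nth)
  moreover have "distinct (concat (rev L))" using d distinct_rev_concat by blast
  ultimately show ?thesis using col_of_nth[of "rev L" "length L - 1 - col_of v L" v] b by simp
qed

lemma bump_left_lengths: "map length (snd (bump_left y R)) = map length R"
  by (induction y R rule: bump_left.induct) (simp_all del: bump_left.simps(2) add: bump_left_Cons)

definition corner :: "nat list list \<Rightarrow> nat \<Rightarrow> nat \<Rightarrow> bool" where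
  "corner T i j \<longleftrightarrow> j < length T \<and> Suc i = length (T!j) \<and> (Suc j < length T \<longrightarrow> length (T!Suc j) \<le> i)"

lemma col_del_eq:
  assumes "corner T i j"
  shows "col_del T (i, j) = (fst (bump_left (last (T!j)) (rev (take j T))),
            rev (snd (bump_left (last (T!j)) (rev (take j T)))) @ butlast (T!j) # drop (Suc j) T)"
proof -
  have l: "Suc i = length (T!j)" using assms by (simp add: corner_def)
  hence y: "T!j!i = last (T!j)" by (metis diff_Suc_1 last_conv_nth length_greater_0_conv zero_less_Suc)
  have c: "take i (T!j) @ drop (Suc i) (T!j) = butlast (T!j)" using l by (simp add: butlast_conv_take flip: l)
  show ?thesis unfolding col_del_def using y c by (simp add: Let_def split: prod.splits)
qed

lemma wf_tab_length_antimono: "wf_tab T \<Longrightarrow> m \<le> n \<Longrightarrow> n < length T \<Longrightarrow> length (T!n) \<le> length (T!m)"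
proof -
  assume w: "wf_tab T" and mn: "m \<le> n" "n < length T"
  show ?thesis
  proof (cases "m = n")
    case False
    hence "dominates (T!m) (T!n)" using wf_tab_dominates[OF w] mn by simp
    hence "card (set (T!n)) \<le> card (set (T!m))" by (rule dominates_card)
    moreover have "distinct (T!n)" "distinct (T!m)" using w mn wf_tab_sorted strict_sorted_iff
      by (metis le_less_trans nth_mem)+
    ultimately show ?thesis by (simp add: distinct_card)
  qed simp
qed

text \<open>Deleting the corner y at the bottom of column C = T ! j of T = A @ C # B0: the columns of A are
  visited right to left, as R = rev A, and become rev ls in the result T'.\<close>

locale col_deletion =
  fixes T :: "nat list list" and i j :: nat
  assumes w: "wf_tab T" and cor: "corner T i j"
begin

definition "C = T!j"
definition "A = take j T"
definition "B0 = drop (Suc j) T"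
definition "y = last C"
definition "R = rev A"
definition "x = fst (bump_left y R)"
definition "ls = snd (bump_left y R)"
definition "T' = rev ls @ butlast C # B0"

lemma j_less: "j < length T" using cor by (simp add: corner_def)
lemma length_C: "length C = Suc i" using cor by (simp add: corner_def C_def)
lemma T_split: "T = A @ C # B0" unfolding A_def C_def B0_def using j_less by (simp add: id_take_nth_drop)
lemma length_A: "length A = j" using j_less by (simp add: A_def)
lemma length_R: "length R = j" using length_A by (simp add: R_def)
lemma col_del_T: "col_del T (i, j) = (x, T')" using col_del_eq[OF cor] unfolding x_def T'_def ls_def y_def R_def A_def C_def B0_def by simp

lemma wfA: "wf_tab A" and wfCB: "wf_tab (C # B0)" and disjACB: "entries A \<inter> entries (C # B0) = {}"
  and domAC: "A \<noteq> [] \<longrightarrow> dominates (last A) C"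
proof -
  have "wf_tab (A @ C # B0)" using w by (simp only: T_split[symmetric])
  then show "wf_tab A" "wf_tab (C # B0)" "entries A \<inter> entries (C # B0) = {}" "A \<noteq> [] \<longrightarrow> dominates (last A) C"
    using wf_tab_append[of A "C # B0"] by auto
qed
lemma sorted_C: "sorted_wrt (<) C" and wfB0: "wf_tab B0" and disjCB: "set C \<inter> entries B0 = {}" and domCB: "B0 \<noteq> [] \<longrightarrow> dominates C (hd B0)"
  using wfCB wf_tab_Cons by auto
lemma distinct_C: "distinct C" using sorted_C strict_sorted_iff by blast
lemma C_nonempty: "C \<noteq> []" using length_C by auto
lemma y_in_C: "y \<in> set C" using C_nonempty by (simp add: y_def)
lemma C_butlast_y: "C = butlast C @ [y]" using C_nonempty by (simp add: y_def)
lemma distinct_butlast_y: "distinct (butlast C @ [y])" by (simp only: C_butlast_y[symmetric] distinct_C)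
lemma sorted_butlast_y: "sorted_wrt (<) (butlast C @ [y])" by (simp only: C_butlast_y[symmetric] sorted_C)
lemma set_C: "set C = insert y (set (butlast C))"
proof -
  have "set (butlast C @ [y]) = insert y (set (butlast C))" by simp
  then show ?thesis by (simp only: C_butlast_y[symmetric])
qed
lemma set_butlast_C: "set (butlast C) = set C - {y}" using distinct_butlast_y set_C by auto
lemma le_y: "\<And>v. v \<in> set C \<Longrightarrow> v \<le> y"
proof -
  fix v assume "v \<in> set C"
  hence "v = y \<or> v \<in> set (butlast C)" using set_C by simp
  then show "v \<le> y" using sorted_butlast_y by (auto simp: sorted_wrt_append less_imp_le)
qed
lemma sorted_butlast_C: "sorted_wrt (<) (butlast C)" using sorted_butlast_y by (simp add: sorted_wrt_append)
lemma length_hd_B0: "B0 \<noteq> [] \<longrightarrow> length (hd B0) \<le> i"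
  using cor j_less unfolding corner_def B0_def by (simp add: hd_drop_conv_nth)

lemma wf_rev_R: "wf_tab (rev R)" using wfA by (simp add: R_def)
lemma entries_R: "entries R = entries A" by (simp add: R_def tab_entries_def)
lemma distinct_R: "distinct (concat R)" using wfA wf_tab_distinct distinct_rev_concat by (simp add: R_def)
lemma y_notin_R: "y \<notin> entries R" using disjACB y_in_C entries_R by auto

lemma bumpable_y_R: "bumpable y R"
proof (rule bumpable_if_wf[OF wf_rev_R])
  show "R \<noteq> [] \<longrightarrow> (\<exists>v\<in>set (hd R). v < y)"
  proof
    assume "R \<noteq> []"
    hence An: "A \<noteq> []" by (simp add: R_def)
    have hd: "hd R = last A" using An by (simp add: R_def hd_rev)
    have d: "count_upto (set C) y \<le> count_below (set (last A)) y" using domAC An unfolding dominates_def by blast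
    have "1 \<le> count_upto (set C) y"
    proof -
      have "{y} \<subseteq> {v \<in> set C. v \<le> y}" using y_in_C by auto
      hence "card {y} \<le> card {v \<in> set C. v \<le> y}" by (intro card_mono) auto
      then show ?thesis by (simp add: count_upto_def)
    qed
    hence "{v \<in> set (last A). v < y} \<noteq> {}" using d unfolding count_below_def by (metis card.empty not_one_le_zero le_trans)
    then show "\<exists>v\<in>set (hd R). v < y" unfolding hd by auto
  qed
qed

lemma bump_props: "length ls = length R \<and> entries ls = insert y (entries R) - {x} \<and> x \<in> insert y (entries R) \<and>
    distinct (concat ls) \<and> x \<le> y"
  using bump_left_props[OF bumpable_y_R distinct_R y_notin_R] unfolding ls_def x_def by simp

lemma entries_T: "entries T = entries A \<union> set C \<union> entries B0"
proof -
  have "entries (A @ C # B0) = entries T" by (simp only: T_split[symmetric])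
  then show ?thesis by (simp add: Un_assoc)
qed
lemma x_in_T: "x \<in> entries T"
proof -
  have "x \<in> insert y (entries A)" using bump_props entries_R by simp
  hence "x = y \<or> x \<in> entries A" by simp
  then show ?thesis unfolding entries_T using y_in_C by (metis UnI1 UnI2)
qed

lemma entries_T': "entries T' = entries T - {x}"
proof -
  have "entries T' = entries ls \<union> set (butlast C) \<union> entries B0" by (simp add: T'_def tab_entries_def Un_assoc Un_left_commute)
  also have "\<dots> = (insert y (entries A) - {x}) \<union> (set C - {y}) \<union> entries B0" using bump_props entries_R set_butlast_C by simp
  also have "\<dots> = entries T - {x}"
  proof -
    have "x \<notin> set C - {y}" using bump_props entries_R disjACB by auto
    moreover have "x \<notin> entries B0" using bump_props entries_R disjACB disjCB y_in_C by auto
    ultimately show ?thesis unfolding entries_T using y_in_C by blast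
  qed
  finally show ?thesis .
qed

lemma wf_T': "wf_tab T'"
proof -
  have bw: "wf_tab (rev ls) \<and> (R \<noteq> [] \<longrightarrow> (\<forall>t. count_upto (set C - {y}) t \<le> count_below (set (hd ls)) t))"
  proof -
    have "R \<noteq> [] \<longrightarrow> (\<forall>t. count_upto (set C) t \<le> count_below (set (hd R)) t)"
      using domAC unfolding dominates_def R_def by (simp add: hd_rev)
    moreover have "set C - {y} = set C - {y} \<or> (\<exists>w. set C - {y} = insert w (set C - {y}) \<and> y < w \<and> w \<notin> set C)" by (rule disjI1) (rule refl)
    ultimately have "wf_tab (rev (snd (bump_left y R))) \<and> (R \<noteq> [] \<longrightarrow> (\<forall>t. count_upto (set C - {y}) t \<le> count_below (set (hd (snd (bump_left y R)))) t))"
      by (rule wf_tab_bump_left[OF bumpable_y_R wf_rev_R y_notin_R y_in_C finite_set])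
    then show ?thesis unfolding ls_def .
  qed
  have w2: "wf_tab (butlast C # B0)"
  proof -
    have "B0 \<noteq> [] \<longrightarrow> dominates (butlast C) (hd B0)"
    proof
      assume ne: "B0 \<noteq> []"
      have dm: "dominates C (hd B0)" using domCB ne by simp
      have lh: "length (hd B0) \<le> i" using length_hd_B0 ne by simp
      have dh: "distinct (hd B0)" using wfB0 ne wf_tab_sorted strict_sorted_iff by (metis list.set_sel(1))
      show "dominates (butlast C) (hd B0)" unfolding dominates_def
      proof
        fix t
        show "count_upto (set (hd B0)) t \<le> count_below (set (butlast C)) t"
        proof (cases "y < t")
          case True
          have "\<forall>v\<in>set C - {y}. v < t" using True le_y le_less_trans by blast
          hence "count_below (set C - {y}) t = card (set C - {y})" by (intro count_below_all) simp_all
          moreover have "card (set C - {y}) = i" using length_C distinct_C y_in_C by (simp add: distinct_card)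
          moreover have "count_upto (set (hd B0)) t \<le> length (hd B0)" using count_upto_le_card[of "set (hd B0)" t] dh by (simp add: distinct_card)
          ultimately show ?thesis using lh set_butlast_C by simp
        next
          case False
          have "count_below (set C - {y}) t + 0 = count_below (set C) t" using count_below_remove[of "set C" y t] y_in_C False by simp
          then show ?thesis using dm set_butlast_C unfolding dominates_def by simp
        qed
      qed
    qed
    moreover have "set (butlast C) \<inter> entries B0 = {}" using set_butlast_C disjCB by auto
    ultimately show ?thesis using wf_tab_Cons sorted_butlast_C wfB0 by simp
  qed
  have disj: "entries (rev ls) \<inter> entries (butlast C # B0) = {}"
  proof -
    have "entries (rev ls) = insert y (entries A) - {x}" using bump_props entries_R by (simp add: tab_entries_def)
    then show ?thesis using set_butlast_C disjACB disjCB y_in_C by auto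
  qed
  have dm: "rev ls \<noteq> [] \<longrightarrow> dominates (last (rev ls)) (butlast C)"
  proof
    assume "rev ls \<noteq> []"
    hence ne: "ls \<noteq> []" by simp
    hence "R \<noteq> []" using bump_props by (metis length_0_conv)
    hence "\<forall>t. count_upto (set C - {y}) t \<le> count_below (set (hd ls)) t" using bw by blast
    moreover have "last (rev ls) = hd ls" using ne by (simp add: last_rev)
    ultimately show "dominates (last (rev ls)) (butlast C)" unfolding dominates_def set_butlast_C by simp
  qed
  have "wf_tab (rev ls) \<and> wf_tab (butlast C # B0) \<and> entries (rev ls) \<inter> entries (butlast C # B0) = {} \<and>
     (rev ls \<noteq> [] \<and> butlast C # B0 \<noteq> [] \<longrightarrow> dominates (last (rev ls)) (hd (butlast C # B0)))"
    using bw w2 disj dm by (intro conjI) simp_all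
  then show ?thesis unfolding T'_def using wf_tab_append[of "rev ls" "butlast C # B0"] by (rule_tac iffD2) auto
qed

lemma length_ls: "length ls = j" using bump_props length_R by simp
lemma length_T': "length T' = length T"
proof -
  have "length (A @ C # B0) = length T" by (simp only: T_split[symmetric])
  hence "length T = j + Suc (length B0)" using length_A by simp
  moreover have "length T' = length ls + Suc (length B0)" by (simp add: T'_def)
  ultimately show ?thesis using length_ls by simp
qed

lemma T'_nth_lt: "c < j \<Longrightarrow> T'!c = rev ls ! c" using length_ls by (simp add: T'_def nth_append)
lemma T'_nth_j: "T'!j = butlast C" using length_ls by (simp add: T'_def nth_append)
lemma T'_nth_gt: "j < c \<Longrightarrow> T'!c = B0 ! (c - Suc j)" using length_ls by (simp add: T'_def nth_append)
lemma T_nth_lt: "c < j \<Longrightarrow> T!c = A ! c"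
proof -
  assume c: "c < j"
  have "(A @ C # B0)!c = T!c" by (simp only: T_split[symmetric])
  then show ?thesis using c length_A by (simp add: nth_append)
qed
lemma T_nth_gt: "j < c \<Longrightarrow> T!c = B0 ! (c - Suc j)"
proof -
  assume c: "j < c"
  have "(A @ C # B0)!c = T!c" by (simp only: T_split[symmetric])
  then show ?thesis using c length_A by (simp add: nth_append)
qed

lemma length_T'_nth: "c < length T \<Longrightarrow> length (T'!c) = (if c = j then i else length (T!c))"
proof -
  assume c: "c < length T"
  have ml: "map length ls = map length R" using bump_left_lengths unfolding ls_def by simp
  consider "c < j" | "c = j" | "j < c" by linarith
  then show "length (T'!c) = (if c = j then i else length (T!c))"
  proof cases
    case 1
    have "length (rev ls ! c) = length (rev R ! c)"
    proof -
      have "map length (rev ls) = map length (rev R)" using ml by (simp add: rev_map[symmetric])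
      then show ?thesis using 1 length_ls length_R by (metis length_map length_rev nth_map)
    qed
    then show ?thesis using 1 T'_nth_lt T_nth_lt by (simp add: R_def)
  next
    case 2
    then show ?thesis using T'_nth_j length_C by simp
  next
    case 3
    then show ?thesis using T'_nth_gt T_nth_gt by simp
  qed
qed

lemma entries_ls: "entries ls = insert y (entries A) - {x}" using bump_props entries_R by simp
lemma distinct_ls: "distinct (concat ls)" using bump_props by simp
lemma x_in_y_A: "x \<in> insert y (entries A)" using bump_props entries_R by simp
lemma y_notin_A: "y \<notin> entries A" using y_notin_R entries_R by simp
lemma col_of_T: "col_of v T = col_of v (A @ C # B0)" by (simp only: T_split[symmetric])

lemma col_of_T_A: "v \<in> entries A \<Longrightarrow> int (col_of v T) = int j - 1 - rcol_before y R v"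
proof -
  assume v: "v \<in> entries A"
  have vy: "v \<noteq> y" using v y_notin_A by auto
  have "col_of v T = col_of v A" using col_of_T v by (simp add: col_of_append)
  also have "\<dots> = col_of v (rev R)" by (simp add: R_def)
  also have "\<dots> = length R - 1 - col_of v R" using col_of_rev[OF distinct_R] v entries_R by simp
  finally have "col_of v T = j - 1 - col_of v R" using length_R by simp
  moreover have "col_of v R < j" using col_of_bound[of v R] v entries_R length_R by simp
  ultimately show ?thesis using vy by (simp add: rcol_before_def of_nat_diff)
qed

lemma col_of_T_C: "v \<in> set C \<Longrightarrow> col_of v T = j"
proof -
  assume v: "v \<in> set C"
  have "v \<notin> entries A" using v disjACB by auto
  then show ?thesis using col_of_T v length_A by (simp add: col_of_append)
qed

lemma col_of_T_B: "v \<in> entries B0 \<Longrightarrow> col_of v T = j + 1 + col_of v B0"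
proof -
  assume v: "v \<in> entries B0"
  have "v \<notin> entries A" "v \<notin> set C" using v disjACB disjCB by auto
  then show ?thesis using col_of_T v length_A by (simp add: col_of_append)
qed

lemma col_of_T'_ls: "v \<in> entries ls \<Longrightarrow> int (col_of v T') = int j - 1 - int (col_of v ls)"
proof -
  assume v: "v \<in> entries ls"
  have e: "entries (rev ls) = entries ls" by (simp add: tab_entries_def)
  have "col_of v T' = col_of v (rev ls)" using v e by (simp add: T'_def col_of_append)
  also have "\<dots> = length ls - 1 - col_of v ls" using col_of_rev[OF distinct_ls] v by simp
  finally show ?thesis using col_of_bound[of v ls] v length_ls by (simp add: of_nat_diff)
qed

lemma col_of_T'_C: "v \<in> set (butlast C) \<Longrightarrow> col_of v T' = j"
proof -
  assume v: "v \<in> set (butlast C)"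
  have "v \<notin> entries ls" using v entries_ls set_butlast_C disjACB by auto
  hence "v \<notin> entries (rev ls)" by (simp add: tab_entries_def)
  then show ?thesis using v length_ls by (simp add: T'_def col_of_append)
qed

lemma col_of_T'_B: "v \<in> entries B0 \<Longrightarrow> col_of v T' = j + 1 + col_of v B0"
proof -
  assume v: "v \<in> entries B0"
  have "v \<notin> entries ls" using v entries_ls disjACB disjCB y_in_C by auto
  hence "v \<notin> entries (rev ls)" by (simp add: tab_entries_def)
  moreover have "v \<notin> set (butlast C)" using v set_butlast_C disjCB by auto
  ultimately show ?thesis using v length_ls by (simp add: T'_def col_of_append)
qed

definition col_after :: "nat \<Rightarrow> int" where "col_after v = (if v = x then -1 else int (col_of v T'))"

lemma col_after_yA: "v \<in> insert y (entries A) \<Longrightarrow> col_after v = int j - 1 - rcol_after y R v"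
proof -
  assume v: "v \<in> insert y (entries A)"
  show ?thesis
  proof (cases "v = x")
    case True then show ?thesis using length_R by (simp add: col_after_def rcol_after_def x_def)
  next
    case False
    hence "v \<in> entries ls" using v entries_ls by simp
    then show ?thesis using col_of_T'_ls False by (simp add: col_after_def rcol_after_def x_def ls_def)
  qed
qed

lemma col_of_T_yA: "v \<in> insert y (entries A) \<Longrightarrow> int (col_of v T) = int j - 1 - rcol_before y R v"
proof -
  assume v: "v \<in> insert y (entries A)"
  show ?thesis
  proof (cases "v = y")
    case True then show ?thesis using col_of_T_C y_in_C by (simp add: rcol_before_def)
  next
    case False then show ?thesis using v col_of_T_A by simp
  qed
qed

lemma col_desc_col_del:
  assumes k: "k \<in> entries T" and sk: "Suc k \<in> entries T"
  shows "(col_after (Suc k) \<le> col_after k) \<longleftrightarrow> (col_of (Suc k) T \<le> col_of k T)"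
proof -
  let ?S = "insert y (entries A)"
  have entT2: "entries T = ?S \<union> (set C - {y}) \<union> entries B0" using entries_T y_in_C by auto
  have other_gp: "\<And>v. v \<in> (set C - {y}) \<union> entries B0 \<Longrightarrow> col_after v = int (col_of v T) \<and> j \<le> col_of v T"
  proof -
    fix v assume v: "v \<in> (set C - {y}) \<union> entries B0"
    have vx: "v \<noteq> x" using v x_in_y_A disjACB disjCB y_in_C by auto
    show "col_after v = int (col_of v T) \<and> j \<le> col_of v T"
    proof (cases "v \<in> entries B0")
      case True then show ?thesis using col_of_T_B col_of_T'_B vx by (simp add: col_after_def)
    next
      case False
      hence "v \<in> set (butlast C)" "v \<in> set C" using v set_butlast_C by auto
      then show ?thesis using col_of_T_C col_of_T'_C vx by (simp add: col_after_def)
    qed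
  qed
  have R_gp: "\<And>v. v \<in> ?S \<Longrightarrow> col_after v \<le> int j - 1"
  proof -
    fix v assume "v \<in> ?S"
    then show "col_after v \<le> int j - 1" using col_after_yA[of v] rcol_after_nonneg[of y R v] by linarith
  qed
  have R_col: "\<And>v. v \<in> ?S \<Longrightarrow> v \<noteq> y \<Longrightarrow> int (col_of v T) \<le> int j - 1"
  proof -
    fix v assume "v \<in> ?S" "v \<noteq> y"
    then show "int (col_of v T) \<le> int j - 1" using col_of_T_yA[of v] by (simp add: rcol_before_def)
  qed
  consider "k \<in> ?S \<and> Suc k \<in> ?S" | "k \<in> ?S \<and> Suc k \<notin> ?S" | "k \<notin> ?S \<and> Suc k \<in> ?S" | "k \<notin> ?S \<and> Suc k \<notin> ?S" by blast
  then show ?thesis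
  proof cases
    case 1
    have "entries R = entries A" by (rule entries_R)
    hence "(rcol_after y R k \<le> rcol_after y R (Suc k)) \<longleftrightarrow> (rcol_before y R k \<le> rcol_before y R (Suc k))"
      using bump_left_rcol_order[OF bumpable_y_R distinct_R y_notin_R] 1 by simp
    moreover have "int (col_of (Suc k) T) \<le> int (col_of k T) \<longleftrightarrow> col_of (Suc k) T \<le> col_of k T" by simp
    ultimately show ?thesis using col_after_yA[of k] col_after_yA[of "Suc k"] col_of_T_yA[of k] col_of_T_yA[of "Suc k"] 1 by linarith
  next
    case 2
    have o: "Suc k \<in> (set C - {y}) \<union> entries B0" using 2 sk entT2 by blast
    show ?thesis
    proof (cases "k = y")
      case True
      have "Suc k \<notin> set C" using le_y True by fastforce
      hence "Suc k \<in> entries B0" using o by blast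
      hence "j + 1 \<le> col_of (Suc k) T" using col_of_T_B by simp
      moreover have "col_of k T = j" using True col_of_T_C y_in_C by simp
      ultimately show ?thesis using other_gp[OF o] R_gp[of k] 2 by simp
    next
      case False
      then show ?thesis using other_gp[OF o] R_gp[of k] R_col[of k] 2 by simp
    qed
  next
    case 3
    have o: "k \<in> (set C - {y}) \<union> entries B0" using 3 k entT2 by blast
    have "int (col_of (Suc k) T) \<le> int j" using col_of_T_yA[of "Suc k"] 3 rcol_before_ge[of y R "Suc k"] by simp
    then show ?thesis using other_gp[OF o] R_gp[of "Suc k"] 3 by simp
  next
    case 4
    have o: "k \<in> (set C - {y}) \<union> entries B0" "Suc k \<in> (set C - {y}) \<union> entries B0" using 4 k sk entT2 by blast+
    then show ?thesis using other_gp by simp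
  qed
qed

end

lemma sorted_last: "sorted_wrt (<) (c::nat list) \<Longrightarrow> v \<in> set c \<Longrightarrow> v \<le> last c"
proof -
  assume s: "sorted_wrt (<) c" and v: "v \<in> set c"
  then obtain p where p: "p < length c" "c!p = v" by (auto simp: in_set_conv_nth)
  have ne: "c \<noteq> []" using v by auto
  have l: "last c = c ! (length c - 1)" using ne by (simp add: last_conv_nth)
  show ?thesis
  proof (cases "p = length c - 1")
    case True then show ?thesis using l p by simp
  next
    case False
    hence "p < length c - 1" using p by simp
    hence "c!p < c!(length c - 1)" using s by (simp add: sorted_wrt_iff_nth_less)
    then show ?thesis using l p by simp
  qed
qed

lemma bump_left_snoc_fst:
  assumes "bumpable y (X @ [c])"
  shows "fst (bump_left y (X @ [c])) \<in> set c"
proof -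
  let ?u = "fst (bump_left y X)"
  have v: "bumpable ?u [c]" using bumpable_append[OF assms] by simp
  hence ex: "\<exists>v\<in>set c. v < ?u" by simp
  have "fst (bump_left y (X @ [c])) = fst (bump_left ?u [c])" using bump_left_append[of y X "[c]"] by simp
  also have "\<dots> = Max {v \<in> set c. v < ?u}" by (simp add: Let_def)
  finally show ?thesis using Max_less(1)[OF ex] by simp
qed

locale col_deletion_twice = col_deletion +
  fixes i' j' :: nat
  assumes cor': "corner T' i' j'"
begin

sublocale b: col_deletion T' i' j' using wf_T' cor' by unfold_locales

lemma j'_less: "j' < length T" using b.j_less length_T' by simp

lemma length_T'_j': "length (T' ! j') = Suc i'" using b.length_C by (simp add: b.C_def)

lemma row_order: "i' < i \<longleftrightarrow> j \<le> j'"
proof (cases "j' < j")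
  case True
  have "length (T!j) \<le> length (T!j')" using wf_tab_length_antimono[OF w] True j_less by simp
  then show ?thesis using length_T'_j' length_T'_nth[OF j'_less] True length_C by (simp add: C_def)
next
  case False
  show ?thesis
  proof (cases "j' = j")
    case True
    then show ?thesis using length_T'_j' length_T'_nth[OF j'_less] by simp
  next
    case False
    hence jj: "j < j'" using \<open>\<not> j' < j\<close> by simp
    have "length (T'!j') = length (T!j')" using length_T'_nth[OF j'_less] jj by simp
    moreover have "Suc j < length T" using jj j'_less by simp
    hence "length (T!j') \<le> length (T!Suc j)" using wf_tab_length_antimono[OF w] jj j'_less by simp
    moreover have "length (T!Suc j) \<le> i" using cor \<open>Suc j < length T\<close> by (simp add: corner_def)
    ultimately show ?thesis using length_T'_j' jj by simp
  qed
qed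

lemma output_less_if_left:
  assumes "j' < j"
  shows "x < b.x"
proof -
  define m where "m = j - 1 - j'"
  have mj: "m < j" "Suc m + j' = j" using assms by (auto simp: m_def)
  define R1 where "R1 = take m R"
  define R2 where "R2 = drop (Suc m) R"
  define c where "c = R ! m"
  have Rdec: "R = R1 @ c # R2" unfolding R1_def R2_def c_def using mj length_R by (simp add: id_take_nth_drop)
  have vb2: "bumpable (fst (bump_left y R1)) (c # R2)"
    using bumpable_append[of y R1 "c # R2"] bumpable_y_R Rdec by auto
  define wv where "wv = fst (bump_left y R1)"
  define z where "z = Max {v \<in> set c. v < wv}"
  have ex: "\<exists>v\<in>set c. v < wv" using vb2 wv_def by simp
  have zc: "z \<in> set c" "z < wv" using Max_less[OF ex] z_def by auto
  have vbz: "bumpable z R2" using vb2 wv_def z_def by simp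
  have blR: "bump_left y R = (fst (bump_left z R2), snd (bump_left y R1) @ col_replace z wv c # snd (bump_left z R2))"
    using bump_left_append[of y R1 "c # R2"] bump_left_Cons[of wv c R2] Rdec wv_def z_def by simp
  have xx: "x = fst (bump_left z R2)" using blR by (simp add: x_def)
  have lsx: "ls = snd (bump_left y R1) @ col_replace z wv c # snd (bump_left z R2)" using blR by (simp add: ls_def)
  have "length (snd (bump_left y R1)) = length R1" using bump_left_lengths[of y R1] by (metis length_map)
  hence lR1: "length (snd (bump_left y R1)) = m" using mj length_R by (simp add: R1_def)
  have Cb: "b.C = col_replace z wv c"
  proof -
    have "b.C = T' ! j'" by (simp add: b.C_def)
    also have "\<dots> = rev ls ! j'" using T'_nth_lt assms by simp
    also have "\<dots> = ls ! m" using length_ls assms mj by (simp add: rev_nth m_def)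
    also have "\<dots> = col_replace z wv c" using lsx lR1 by (simp add: nth_append)
    finally show ?thesis .
  qed
  have Rb: "b.R = snd (bump_left z R2)"
  proof -
    have "take j' T' = take j' (rev ls)" using length_ls assms by (simp add: T'_def)
    hence e1: "b.R = rev (take j' (rev ls))" by (simp add: b.R_def b.A_def)
    have e2: "rev (take j' (rev ls)) = drop (length ls - j') ls" by (simp add: take_rev)
    have "length ls - j' = Suc m" using length_ls mj by linarith
    hence e3: "drop (length ls - j') ls = drop (Suc m) ls" by simp
    have e4: "drop (Suc m) ls = snd (bump_left z R2)" using lsx lR1 by simp
    show ?thesis using e1 e2 e3 e4 by simp
  qed
  have wy: "wv \<le> b.y"
  proof -
    have "wv \<in> set (col_replace z wv c)" using set_col_replace[OF zc(1)] by simp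
    moreover have "sorted_wrt (<) b.C" by (rule b.sorted_C)
    ultimately show ?thesis using sorted_last Cb by (simp add: b.y_def)
  qed
  have dR: "distinct (concat R)" by (rule distinct_R)
  hence dR2: "distinct (concat R2)" and zR2: "z \<notin> entries R2" using Rdec zc by (auto simp: tab_entries_def)
  have v2: "bumpable b.y (snd (bump_left z R2))" using b.bumpable_y_R Rb by simp
  have zb: "z < b.y" using zc wy by simp
  have "fst (bump_left z R2) < fst (bump_left b.y (snd (bump_left z R2)))"
    using bump_left_twice_above[OF vbz v2 zb zR2 dR2] .
  then show ?thesis unfolding xx b.x_def Rb .
qed

lemma output_greater_if_same:
  assumes "j' = j"
  shows "b.x < x"
proof -
  have Cb: "b.C = butlast C" unfolding b.C_def using T'_nth_j assms by simp
  have Rb: "b.R = ls"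
  proof -
    have "take j' T' = rev ls" using length_ls assms by (simp add: T'_def)
    then show ?thesis by (simp add: b.R_def b.A_def)
  qed
  have "b.y \<in> set (butlast C)" using b.y_in_C Cb by simp
  hence "b.y \<in> set C" "b.y \<noteq> y" using set_butlast_C by auto
  hence "b.y < y" using le_y[of b.y] by simp
  moreover have "bumpable b.y (snd (bump_left y R))" using b.bumpable_y_R Rb by (simp add: ls_def)
  ultimately have "fst (bump_left b.y (snd (bump_left y R))) < fst (bump_left y R)"
    using bump_left_twice_below[OF bumpable_y_R _ _ y_notin_R distinct_R] by blast
  then show ?thesis unfolding b.x_def x_def Rb ls_def .
qed

lemma output_greater_if_right:
  assumes "j < j'"
  shows "b.x < x"
proof -
  define P where "P = take (j' - j - 1) B0"
  have tk: "take j' T' = rev ls @ butlast C # P"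
  proof -
    have "take j' T' = rev ls @ take (j' - j) (butlast C # B0)" using length_ls assms by (simp add: T'_def)
    moreover have "j' - j = Suc (j' - j - 1)" using assms by simp
    hence "take (j' - j) (butlast C # B0) = butlast C # P" unfolding P_def by (metis take_Suc_Cons)
    ultimately show ?thesis by simp
  qed
  have Rb: "b.R = (rev P @ [butlast C]) @ ls" using tk by (simp add: b.R_def b.A_def)
  define z where "z = fst (bump_left b.y (rev P @ [butlast C]))"
  have vbb: "bumpable b.y ((rev P @ [butlast C]) @ ls)" using b.bumpable_y_R Rb by simp
  have zin: "z \<in> set (butlast C)" using bump_left_snoc_fst bumpable_append[OF vbb] z_def by simp
  have "z \<in> set C" "z \<noteq> y" using zin set_butlast_C by auto
  hence zy: "z < y" using le_y[of z] by simp
  have vbz: "bumpable z ls" using bumpable_append[OF vbb] z_def by simp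
  have bx: "b.x = fst (bump_left z ls)"
    using bump_left_append[of b.y "rev P @ [butlast C]" ls] Rb z_def by (simp add: b.x_def)
  show ?thesis unfolding bx x_def ls_def
    by (rule bump_left_twice_below[OF bumpable_y_R _ zy y_notin_R distinct_R]) (use vbz in \<open>simp add: ls_def\<close>)
qed

lemma output_less_iff: "b.x < x \<longleftrightarrow> i' < i"
proof (cases "j' < j")
  case True
  then show ?thesis using output_less_if_left row_order by auto
next
  case False
  then have "b.x < x" using output_greater_if_same output_greater_if_right by (cases "j' = j") auto
  then show ?thesis using row_order False by auto
qed

end

theorem col_del_twice_output_less_iff:
  assumes w: "wf_tab T" and c1: "corner T i j"
    and c2: "corner (snd (col_del T (i, j))) i' j'"
  shows "fst (col_del (snd (col_del T (i, j))) (i', j')) < fst (col_del T (i, j)) \<longleftrightarrow> i' < i"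
proof -
  interpret a: col_deletion T i j using w c1 by unfold_locales
  interpret col_deletion_twice T i j i' j' using w c1 c2 a.col_del_T by unfold_locales simp_all
  show ?thesis using a.col_del_T b.col_del_T output_less_iff by simp
qed

section \<open>Placing a new entry\<close>

definition shape :: "nat list list \<Rightarrow> (nat \<times> nat) set" where
  "shape T = {(i, c). c < length T \<and> i < length (T!c)}"

definition addable :: "nat list list \<Rightarrow> nat \<Rightarrow> nat \<Rightarrow> bool" where
  "addable T i j \<longleftrightarrow> (i, j) \<notin> shape T \<and> (0 < i \<longrightarrow> (i - 1, j) \<in> shape T) \<and> (0 < j \<longrightarrow> (i, j - 1) \<in> shape T)"

lemma shape_col_del:
  assumes "wf_tab T" "corner T i j"
  shows "shape (snd (col_del T (i, j))) = shape T - {(i, j)}"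
proof -
  interpret a: col_deletion T i j using assms by unfold_locales
  have "snd (col_del T (i, j)) = a.T'" using a.col_del_T by simp
  moreover have "shape a.T' = shape T - {(i, j)}"
  proof -
    have lj: "length (T!j) = Suc i" using a.length_C by (simp add: a.C_def)
    show ?thesis unfolding shape_def using a.length_T' a.length_T'_nth lj a.j_less
      by (auto split: if_splits)
  qed
  ultimately show ?thesis by simp
qed

lemma corner_of_shape:
  assumes "(i, j) \<in> shape T" "(Suc i, j) \<notin> shape T" "(i, Suc j) \<notin> shape T"
  shows "corner T i j"
  using assms unfolding shape_def corner_def by auto

lemma entries_conv_nth: "entries T = (\<Union>c<length T. set (T!c))"
proof -
  have "set T = (\<lambda>c. T!c) ` {..<length T}" by (auto simp: set_conv_nth)
  then show ?thesis by (simp add: tab_entries_def)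
qed

lemma dominates_snoc_right:
  assumes d: "dominates a b" and ak: "\<forall>v\<in>set a. v < k" and bk: "\<forall>v\<in>set b. v < k"
    and da: "distinct a" and db: "distinct b" and lb: "length b < length a"
  shows "dominates a (b @ [k])"
  unfolding dominates_def
proof
  fix t
  have kb: "k \<notin> set b" using bk by auto
  have e: "count_upto (set (b @ [k])) t = count_upto (set b) t + (if k \<le> t then 1 else 0)"
    using count_upto_insert[of "set b" k t] kb by simp
  show "count_upto (set (b @ [k])) t \<le> count_below (set a) t"
  proof (cases "k \<le> t")
    case True
    have "count_below (set a) t = card (set a)" using ak True by (intro count_below_all) auto
    moreover have "count_upto (set b) t \<le> card (set b)" by (rule count_upto_le_card) simp
    ultimately show ?thesis using e True lb da db by (simp add: distinct_card)
  next
    case False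
    then show ?thesis using e d unfolding dominates_def by simp
  qed
qed

lemma dominates_snoc_left:
  assumes "dominates a b" "k \<notin> set a"
  shows "dominates (a @ [k]) b"
  unfolding dominates_def
proof
  fix t
  have "count_below (set a) t \<le> count_below (set (a @ [k])) t" using count_below_insert[of "set a" k t] assms(2) by simp
  then show "count_upto (set b) t \<le> count_below (set (a @ [k])) t" using assms(1) unfolding dominates_def by (meson le_trans)
qed

lemma place_cases:
  assumes ad: "addable T i j"
  shows "(j < length T \<and> i = length (T!j) \<and> place T (i, j) k = T[j := T!j @ [k]]) \<or>
         (j = length T \<and> i = 0 \<and> place T (i, j) k = T @ [[k]])"
proof -
  have nin: "(i, j) \<notin> shape T" using ad by (simp add: addable_def)
  show ?thesis
  proof (cases "j < length T")
    case True
    have "length (T!j) \<le> i" using nin True by (simp add: shape_def)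
    moreover have "i \<le> length (T!j)"
    proof (cases i)
      case (Suc i') then have "(i', j) \<in> shape T" using ad by (simp add: addable_def)
      then show ?thesis using Suc by (simp add: shape_def)
    qed simp
    ultimately have ii: "i = length (T!j)" by simp
    have "place T (i, j) k = T[j := T!j @ [k]]" using True ii by (simp add: place_def Let_def)
    then show ?thesis using True ii by simp
  next
    case False
    have jle: "j \<le> length T"
    proof (cases j)
      case (Suc j')
      then have "(i, j') \<in> shape T" using ad by (simp add: addable_def)
      then show ?thesis using Suc by (simp add: shape_def)
    qed simp
    hence jj: "j = length T" using False by simp
    have i0: "i = 0"
    proof (rule ccontr)
      assume "i \<noteq> 0"
      then have "(i - 1, j) \<in> shape T" using ad by (simp add: addable_def)
      then show False using jj by (simp add: shape_def)
    qed
    have "place T (i, j) k = T @ [[k]]" using jj i0 by (simp add: place_def Let_def)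
    then show ?thesis using jj i0 by simp
  qed
qed

context
  fixes T :: "nat list list" and i j k :: nat
  assumes ad: "addable T i j"
begin

lemma place_columns:
  obtains c0 where "j < length (place T (i, j) k)" "place T (i, j) k ! j = c0 @ [k]"
    "set c0 = (if j < length T then set (T!j) else {})" "length c0 = i"
    "\<And>c. c < length (place T (i, j) k) \<Longrightarrow> c \<noteq> j \<Longrightarrow> c < length T \<and> place T (i, j) k ! c = T ! c"
    "length (place T (i, j) k) = max (length T) (Suc j)"
    "j < length T \<longrightarrow> c0 = T ! j"
proof -
  consider "j < length T \<and> i = length (T!j) \<and> place T (i, j) k = T[j := T!j @ [k]]"
    | "j = length T \<and> i = 0 \<and> place T (i, j) k = T @ [[k]]"
    using place_cases[OF ad, of k] by blast
  then show ?thesis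
  proof cases
    case 1
    show ?thesis by (rule that[of "T!j"]) (use 1 in \<open>auto simp: nth_list_update\<close>)
  next
    case 2
    show ?thesis by (rule that[of "[]"]) (use 2 in \<open>auto simp: nth_append\<close>)
  qed
qed

lemma entries_place: "entries (place T (i, j) k) = insert k (entries T)"
proof -
  consider "j < length T" "place T (i, j) k = T[j := T!j @ [k]]" | "place T (i, j) k = T @ [[k]]"
    using place_cases[OF ad, of k] by blast
  then show ?thesis
  proof cases
    case 1
    then show ?thesis by (force simp: entries_conv_nth nth_list_update split: if_splits)
  next
    case 2
    then show ?thesis by simp
  qed
qed

lemma shape_place: "shape (place T (i, j) k) = insert (i, j) (shape T)"
proof -
  consider "j < length T" "i = length (T!j)" "place T (i, j) k = T[j := T!j @ [k]]"
    | "j = length T" "i = 0" "place T (i, j) k = T @ [[k]]"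
    using place_cases[OF ad, of k] by blast
  then show ?thesis
  proof cases
    case 1
    then show ?thesis by (auto simp: shape_def nth_list_update less_Suc_eq)
  next
    case 2
    then show ?thesis by (auto simp: shape_def nth_append less_Suc_eq)
  qed
qed

lemma wf_tab_place:
  assumes w: "wf_tab T" and big: "\<forall>v\<in>entries T. v < k"
  defines "T2 \<equiv> place T (i, j) k"
  shows "wf_tab T2"
proof -
  have kT: "k \<notin> entries T" using big by auto
  consider "j < length T \<and> i = length (T!j) \<and> T2 = T[j := T!j @ [k]]" | "j = length T \<and> i = 0 \<and> T2 = T @ [[k]]"
    using place_cases[OF ad, of k] T2_def by blast
  then show ?thesis
  proof cases
    case 1
    define X where "X = take j T"
    define Y where "Y = drop (Suc j) T"
    have Td: "T = X @ T!j # Y" using 1 unfolding X_def Y_def by (simp add: id_take_nth_drop)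
    have T2d: "T2 = X @ (T!j @ [k]) # Y" using 1 unfolding X_def Y_def by (simp add: upd_conv_take_nth_drop)
    have wT: "wf_tab (X @ T!j # Y)" using w Td by simp
    have wX: "wf_tab X" and wjY: "wf_tab (T!j # Y)" and dXj: "entries X \<inter> entries (T!j # Y) = {}"
      and dmX: "X \<noteq> [] \<longrightarrow> dominates (last X) (T!j)" using wf_tab_append[of X "T!j # Y"] wT by auto
    have sj: "sorted_wrt (<) (T!j)" and wY: "wf_tab Y" and djY: "set (T!j) \<inter> entries Y = {}"
      and dmY: "Y \<noteq> [] \<longrightarrow> dominates (T!j) (hd Y)" using wjY wf_tab_Cons by auto
    have kj: "\<forall>v\<in>set (T!j). v < k" using big 1 by (auto simp: tab_entries_def)
    have sj2: "sorted_wrt (<) (T!j @ [k])" using sj kj by (simp add: sorted_wrt_append)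
    have eT: "entries (X @ T!j # Y) = entries T" by (simp only: Td[symmetric])
    have kY: "k \<notin> entries Y" using kT eT by auto
    have kX: "k \<notin> entries X" using kT eT by auto
    have w2: "wf_tab ((T!j @ [k]) # Y)"
    proof -
      have "Y \<noteq> [] \<longrightarrow> dominates (T!j @ [k]) (hd Y)" using dmY dominates_snoc_left kj by blast
      then show ?thesis using wf_tab_Cons sj2 wY djY kY by auto
    qed
    have dm2: "X \<noteq> [] \<longrightarrow> dominates (last X) (T!j @ [k])"
    proof
      assume Xn: "X \<noteq> []"
      hence j0: "0 < j" using X_def by (cases j) auto
      have lX: "last X = T!(j-1)" using Xn j0 1 X_def by (simp add: last_conv_nth)
      have "(i, j-1) \<in> shape T" using ad j0 by (simp add: addable_def)
      hence lt: "length (T!j) < length (T!(j-1))" using 1 by (simp add: shape_def)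
      have jm1: "j - 1 < length T" using 1 by linarith
      have ak: "\<forall>v\<in>set (T!(j-1)). v < k" using big jm1 by (auto simp: tab_entries_def)
      have da: "distinct (T!(j-1))" using w jm1 wf_tab_sorted strict_sorted_iff nth_mem by metis
      have db: "distinct (T!j)" using sj strict_sorted_iff by blast
      show "dominates (last X) (T!j @ [k])" unfolding lX
        by (rule dominates_snoc_right[OF _ ak kj da db lt]) (use dmX Xn lX in simp)
    qed
    have "entries X \<inter> entries ((T!j @ [k]) # Y) = {}" using dXj kX by auto
    then show ?thesis using T2d wf_tab_append[of X "(T!j @ [k]) # Y"] wX w2 dm2 by simp
  next
    case 2
    have w1: "wf_tab [[k]]" by (simp add: wf_tab_Cons)
    have dm: "T \<noteq> [] \<longrightarrow> dominates (last T) [k]"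
    proof
      assume Tn: "T \<noteq> []"
      hence j0: "0 < j" using 2 by simp
      have "(0, j-1) \<in> shape T" using ad j0 2 by (simp add: addable_def)
      hence ne: "0 < length (last T)" using 2 Tn by (simp add: shape_def last_conv_nth)
      have ak: "\<forall>v\<in>set (last T). v < k" using big Tn by (auto simp: tab_entries_def)
      have da: "distinct (last T)" using w Tn wf_tab_sorted strict_sorted_iff last_in_set by metis
      have "dominates (last T) ([] @ [k])"
        by (rule dominates_snoc_right[OF _ ak _ da]) (use ne in \<open>auto simp: dominates_def count_upto_def\<close>)
      then show "dominates (last T) [k]" by simp
    qed
    then show ?thesis using 2 wf_tab_append[of T "[[k]]"] w w1 kT by auto
  qed
qed
lemma col_row_of_place:
  assumes w: "wf_tab T" and big: "\<forall>v\<in>entries T. v < k"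
  defines "T2 \<equiv> place T (i, j) k"
  shows "col_of k T2 = j" "row_of T2 k = i"
proof -
  obtain c0 where colj: "j < length T2" "T2 ! j = c0 @ [k]" "set c0 = (if j < length T then set (T!j) else {})"
    "length c0 = i"
    and other: "\<And>c. c < length T2 \<Longrightarrow> c \<noteq> j \<Longrightarrow> c < length T \<and> T2 ! c = T ! c"
    and lenT2: "length T2 = max (length T) (Suc j)"
    and old: "j < length T \<longrightarrow> c0 = T ! j"
    using place_columns[folded T2_def] by blast
  show colk: "col_of k T2 = j" using col_of_nth[OF wf_tab_distinct[OF wf_tab_place[OF w big, folded T2_def]] colj(1)] colj by simp
  have s0: "sorted_wrt (<) c0"
  proof (cases "j < length T")
    case True then show ?thesis using old w wf_tab_sorted by auto
  next
    case False then show ?thesis using colj by simp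
  qed
  have c0k: "\<forall>v\<in>set c0. v < k" using colj big by (auto simp: tab_entries_def split: if_splits)
  have "row_of T2 k = count_below (set (c0 @ [k])) k" using colk colj by (simp add: row_of_def)
  also have "\<dots> = card (set c0)"
  proof -
    have "{v \<in> set (c0 @ [k]). v < k} = set c0" using c0k by auto
    then show ?thesis by (simp add: count_below_def)
  qed
  also have "\<dots> = i" using s0 colj strict_sorted_iff distinct_card by metis
  finally show "row_of T2 k = i" .
qed

lemma col_row_of_place_old:
  assumes w: "wf_tab T" and big: "\<forall>v\<in>entries T. v < k" and v: "v \<in> entries T"
  defines "T2 \<equiv> place T (i, j) k"
  shows "col_of v T2 = col_of v T \<and> row_of T2 v = row_of T v"
proof -
  have kT: "k \<notin> entries T" using big by auto
  have d2: "distinct (concat T2)" using wf_tab_distinct[OF wf_tab_place[OF w big]] T2_def by simp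
  obtain c0 where colj: "j < length T2" "T2 ! j = c0 @ [k]" "set c0 = (if j < length T then set (T!j) else {})"
    "length c0 = i"
    and other: "\<And>c. c < length T2 \<Longrightarrow> c \<noteq> j \<Longrightarrow> c < length T \<and> T2 ! c = T ! c"
    and lenT2: "length T2 = max (length T) (Suc j)"
    and old: "j < length T \<longrightarrow> c0 = T ! j"
    using place_columns[folded T2_def] by blast
  define c where "c = col_of v T"
  have cb: "c < length T" "v \<in> set (T!c)" using col_of_bound[OF v] c_def by auto
  have cl: "c < length T2" using cb lenT2 by simp
  have vk: "v < k" using big v by simp
  show "col_of v T2 = col_of v T \<and> row_of T2 v = row_of T v"
  proof (cases "c = j")
    case True
    have "T2 ! c = T ! c @ [k]" using True colj old cb by simp
    moreover have "col_of v T2 = c" using col_of_nth[OF d2 cl] cb \<open>T2 ! c = T ! c @ [k]\<close> by simp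
    moreover have "count_below (set (T!c @ [k])) v = count_below (set (T!c)) v"
      using count_below_insert[of "set (T!c)" k v] vk kT cb by (auto simp: tab_entries_def)
    ultimately show ?thesis using c_def by (simp add: row_of_def)
  next
    case False
    have "T2 ! c = T ! c" using other cl False by simp
    moreover have "col_of v T2 = c" using col_of_nth[OF d2 cl] cb \<open>T2 ! c = T ! c\<close> by simp
    ultimately show ?thesis using c_def by (simp add: row_of_def)
  qed
qed

end

section \<open>Descents of Q\<close>

definition matching :: "(nat \<times> nat) set \<Rightarrow> bool" where
  "matching P \<longleftrightarrow> (\<forall>p\<in>P. fst p \<noteq> snd p) \<and>
     (\<forall>p\<in>P. \<forall>q\<in>P. (fst p = fst q \<or> fst p = snd q \<or> snd p = fst q \<or> snd p = snd q) \<longrightarrow> p = q)"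

lemma matching_insert:
  assumes "matching P" "a \<noteq> b" "a \<notin> inv_support P" "b \<notin> inv_support P"
  shows "matching (insert (a, b) P)"
proof -
  have "\<And>p. p \<in> P \<Longrightarrow> fst p \<noteq> a \<and> snd p \<noteq> a \<and> fst p \<noteq> b \<and> snd p \<noteq> b"
    using assms(3,4) unfolding inv_support_def by force
  then show ?thesis using assms(1,2) unfolding matching_def by fastforce
qed

lemma inv_partner_pair:
  assumes m: "matching P" and ab: "(a, b) \<in> P"
  shows "inv_partner P a = b \<and> inv_partner P b = a"
proof -
  have m1: "\<forall>p\<in>P. fst p \<noteq> snd p" and m2: "\<forall>p\<in>P. \<forall>q\<in>P. (fst p = fst q \<or> fst p = snd q \<or> snd p = fst q \<or> snd p = snd q) \<longrightarrow> p = q"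
    using m[unfolded matching_def] by auto
  have ne: "a \<noteq> b" using m1 ab by force
  have "inv_partner P a = b" unfolding inv_partner_def
  proof (rule the_equality)
    show "(a, b) \<in> P \<or> (b, a) \<in> P" using ab by simp
  next
    fix b' assume h: "(a, b') \<in> P \<or> (b', a) \<in> P"
    then show "b' = b"
    proof
      assume "(a, b') \<in> P" then show ?thesis using m2 ab by force
    next
      assume "(b', a) \<in> P"
      hence "(b', a) = (a, b)" using m2 ab by force
      then show ?thesis using ne by simp
    qed
  qed
  moreover have "inv_partner P b = a" unfolding inv_partner_def
  proof (rule the_equality)
    show "(b, a) \<in> P \<or> (a, b) \<in> P" using ab by simp
  next
    fix a' assume h: "(b, a') \<in> P \<or> (a', b) \<in> P"
    then show "a' = a"
    proof
      assume "(b, a') \<in> P"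
      hence "(b, a') = (a, b)" using m2 ab by force
      then show ?thesis using ne by simp
    next
      assume "(a', b) \<in> P" then show ?thesis using m2 ab by force
    qed
  qed
  ultimately show ?thesis by simp
qed

lemma inv_partner_support:
  assumes m: "matching P" and a: "a \<in> inv_support P"
  shows "inv_partner P a \<in> inv_support P \<and> inv_partner P (inv_partner P a) = a \<and> inv_partner P a \<noteq> a"
proof -
  have m1: "\<forall>p\<in>P. fst p \<noteq> snd p" using m[unfolded matching_def] by auto
  from a obtain p where p: "p \<in> P" "a = fst p \<or> a = snd p" unfolding inv_support_def by auto
  obtain u v where uv: "p = (u, v)" by (cases p)
  have "u \<noteq> v" using m1 p uv by force
  then show ?thesis using p uv inv_partner_pair[OF m, of u v] unfolding inv_support_def by (auto intro: rev_image_eqI)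
qed

definition q_desc :: "nat list list \<Rightarrow> (nat \<Rightarrow> nat) \<Rightarrow> nat \<Rightarrow> bool" where
  "q_desc T f k = (if k \<in> entries T \<and> Suc k \<in> entries T then col_desc T k else if k \<in> entries T then True
     else if Suc k \<in> entries T then False else f (Suc k) < f k)"

lemma q_desc_place:
  assumes ad: "addable T i j" and w: "wf_tab T" and big: "\<forall>v\<in>entries T. v < n"
    and kn: "k \<noteq> n" "Suc k \<noteq> n"
  shows "q_desc (place T (i, j) n) f k \<longleftrightarrow> q_desc T f k"
proof -
  have "k \<in> entries T \<Longrightarrow> Suc k \<in> entries T \<Longrightarrow> col_desc (place T (i, j) n) k = col_desc T k"
    using col_row_of_place_old[OF ad w big] by (simp add: col_desc_def)
  then show ?thesis using entries_place[OF ad] kn by (auto simp: q_desc_def)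
qed

context col_deletion
begin

lemma q_desc_col_del:
  assumes k: "k \<in> entries T \<union> S" "Suc k \<in> entries T \<union> S" and disj: "entries T \<inter> S = {}"
    and fx: "f' x = n" and fS: "\<forall>a\<in>S. f' a = f a \<and> f a < n"
  shows "q_desc T' f' k \<longleftrightarrow> q_desc T f k"
proof -
  have e2: "entries T' = entries T - {x}" by (rule entries_T')
  have cav: "\<And>v. v \<noteq> x \<Longrightarrow> col_after v = int (col_of v T')" by (simp add: col_after_def)
  have cax: "col_after x = -1" by (simp add: col_after_def)
  consider (TT) "k \<in> entries T" "Suc k \<in> entries T" | (TS) "k \<in> entries T" "Suc k \<notin> entries T"
    | (ST) "k \<notin> entries T" "Suc k \<in> entries T" | (SS) "k \<notin> entries T" "Suc k \<notin> entries T" by blast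
  then show ?thesis
  proof cases
    case TT
    have dg: "col_after (Suc k) \<le> col_after k \<longleftrightarrow> col_desc T k"
      using col_desc_col_del TT unfolding col_desc_def by blast
    consider "x = k" | "x = Suc k" | "x \<noteq> k" "x \<noteq> Suc k" by blast
    then show ?thesis
    proof cases
      case 1
      then have "\<not> col_desc T k" using dg cax cav[of "Suc k"] by simp
      moreover have "k \<notin> entries T'" "Suc k \<in> entries T'" using e2 TT 1 by auto
      ultimately show ?thesis using TT by (simp add: q_desc_def)
    next
      case 2
      then have "col_desc T k" using dg cax cav[of k] by simp
      moreover have "k \<in> entries T'" "Suc k \<notin> entries T'" using e2 TT 2 by auto
      ultimately show ?thesis using TT by (simp add: q_desc_def)
    next
      case 3
      then have "col_desc T' k \<longleftrightarrow> col_desc T k"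
        using dg cav[of k] cav[of "Suc k"] unfolding col_desc_def by simp
      moreover have "k \<in> entries T'" "Suc k \<in> entries T'" using e2 TT 3 by auto
      ultimately show ?thesis using TT by (simp add: q_desc_def)
    qed
  next
    case TS
    then have "Suc k \<in> S" using k by simp
    then have "x = k \<Longrightarrow> f' (Suc k) < f' k" using fx fS by simp
    then show ?thesis using TS e2 by (cases "x = k") (auto simp: q_desc_def)
  next
    case ST
    then have "k \<in> S" using k by simp
    then have "x = Suc k \<Longrightarrow> \<not> f' (Suc k) < f' k" using fx fS by fastforce
    then show ?thesis using ST e2 by (cases "x = Suc k") (auto simp: q_desc_def)
  next
    case SS
    then have "k \<in> S" "Suc k \<in> S" using k by auto
    then show ?thesis using SS e2 fS by (simp add: q_desc_def)
  qed
qed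

end

definition partner_word :: "(nat \<times> nat) set \<Rightarrow> nat list" where
  "partner_word P = map (inv_partner P) (sorted_list_of_set (inv_support P))"

definition Q_of :: "(nat \<times> nat) set \<Rightarrow> nat list list \<Rightarrow> nat list list" where
  "Q_of P T = col_ins_word T (reading_word (col_ins_word [] (partner_word P)))"

lemma sundaram_Q_eq_Q_of: "sundaram_Q mus = (case sundaram_part1 mus of (P, T) \<Rightarrow> Q_of P T)"
  by (simp add: sundaram_Q_def Q_of_def partner_word_def reading_word_def row_ins_eq_col_ins Let_def
      split: prod.splits)

context
  fixes P :: "(nat \<times> nat) set"
  assumes m: "matching P" and fin: "finite (inv_support P)"
begin

lemma inv_partner_involution:
  "a \<in> inv_support P \<Longrightarrow> inv_partner P a \<in> inv_support P \<and> inv_partner P (inv_partner P a) = a"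
  using inv_partner_support[OF m] by blast

lemma distinct_partner_word: "distinct (partner_word P)"
proof -
  have "inj_on (inv_partner P) (inv_support P)" by (metis inv_partner_involution inj_onI)
  then show ?thesis using fin by (simp add: partner_word_def distinct_map)
qed

lemma set_partner_word: "set (partner_word P) = inv_support P"
  using fin inv_partner_involution by (force simp: partner_word_def image_iff)

lemma precedes_partner_word:
  assumes "k \<in> inv_support P" "k' \<in> inv_support P" "k \<noteq> k'"
  shows "precedes (partner_word P) k k' \<longleftrightarrow> inv_partner P k < inv_partner P k'"
  unfolding partner_word_def
  by (rule precedes_map_sorted) (use fin assms inv_partner_involution in auto)

lemma precedes_reading_word_partner:
  assumes kA: "k \<in> inv_support P" "Suc k \<in> inv_support P"
  defines "I \<equiv> col_ins_word [] (partner_word P)"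
  shows "precedes (reading_word I) k (Suc k) \<longleftrightarrow> inv_partner P (Suc k) < inv_partner P k"
proof -
  let ?f = "inv_partner P"
  have wI: "wf_tab I" and eI: "entries I = inv_support P"
    using wf_tab_col_ins_word[of "[]" "partner_word P"] col_ins_word_entries[of "[]" "partner_word P"]
      distinct_partner_word set_partner_word by (simp_all add: I_def)
  have "precedes (reading_word I) k (Suc k) \<longleftrightarrow> col_of k I < col_of (Suc k) I"
    by (rule precedes_reading_word) (use wI eI kA wf_tab_sorted wf_tab_distinct in auto)
  also have "\<dots> \<longleftrightarrow> \<not> precedes (partner_word P) k (Suc k)"
    using col_desc_col_ins_word[of "[]" "partner_word P" k] distinct_partner_word set_partner_word kA
    by (auto simp: I_def col_desc_def)
  also have "\<dots> \<longleftrightarrow> ?f (Suc k) < ?f k"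
  proof -
    have "?f k \<noteq> ?f (Suc k)" using inv_partner_involution kA by (metis n_not_Suc_n)
    then show ?thesis using precedes_partner_word[OF kA] by auto
  qed
  finally show ?thesis .
qed

context
  fixes T :: "nat list list"
  assumes w: "wf_tab T" and disj: "entries T \<inter> inv_support P = {}"
begin

lemma reading_word_partner:
  defines "u \<equiv> reading_word (col_ins_word [] (partner_word P))"
  shows "distinct u" "set u = inv_support P"
proof -
  have "wf_tab (col_ins_word [] (partner_word P))"
    using wf_tab_col_ins_word[of "[]" "partner_word P"] distinct_partner_word by simp
  then show "distinct u" using wf_tab_distinct distinct_reading_word u_def by blast
  show "set u = inv_support P"
    using col_ins_word_entries[of "[]" "partner_word P"] distinct_partner_word set_partner_word
    by (simp add: u_def set_reading_word)
qed

lemma wf_tab_Q_of: "wf_tab (Q_of P T)"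
  using wf_tab_col_ins_word[OF w reading_word_partner(1)] reading_word_partner(2) disj
  by (simp add: Q_of_def Int_commute)

lemma entries_Q_of: "entries (Q_of P T) = entries T \<union> inv_support P"
  using col_ins_word_entries[OF wf_tab_distinct[OF w] reading_word_partner(1)] reading_word_partner(2) disj
  by (simp add: Q_of_def Int_commute)

lemma col_desc_Q_of:
  assumes k: "k \<in> entries T \<union> inv_support P" "Suc k \<in> entries T \<union> inv_support P"
  shows "col_desc (Q_of P T) k \<longleftrightarrow> q_desc T (inv_partner P) k"
proof -
  let ?u = "reading_word (col_ins_word [] (partner_word P))"
  have g: "col_desc (Q_of P T) k \<longleftrightarrow> (if k \<in> entries T \<and> Suc k \<in> entries T then col_desc T k
     else if k \<in> entries T then True else if Suc k \<in> entries T then False else precedes ?u k (Suc k))"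
    unfolding Q_of_def
    by (rule col_desc_col_ins_word) (use wf_tab_distinct[OF w] reading_word_partner disj k in auto)
  show ?thesis
  proof (cases "k \<in> entries T \<or> Suc k \<in> entries T")
    case True then show ?thesis using g by (auto simp: q_desc_def)
  next
    case False
    then have "k \<in> inv_support P" "Suc k \<in> inv_support P" using k by auto
    then show ?thesis using g False precedes_reading_word_partner by (simp add: q_desc_def)
  qed
qed

end

end

section \<open>Oscillating tableaux\<close>

definition down_closed :: "(nat \<times> nat) set \<Rightarrow> bool" where
  "down_closed S \<longleftrightarrow> (\<forall>i j i' j'. (i, j) \<in> S \<longrightarrow> i' \<le> i \<longrightarrow> j' \<le> j \<longrightarrow> (i', j') \<in> S)"

lemma down_closed_diagram: "is_partition mu \<Longrightarrow> down_closed (diagram mu)"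
  unfolding down_closed_def
proof (intro allI impI)
  fix i j i' j' assume p: "is_partition mu" and ij: "(i, j) \<in> diagram mu" and le: "i' \<le> i" "j' \<le> j"
  have s: "sorted_wrt (\<ge>) mu" using p by (simp add: is_partition_def)
  have i: "i < length mu" "j < mu ! i" using ij by (auto simp: diagram_def)
  have "mu ! i \<le> mu ! i'"
  proof (cases "i' = i")
    case False
    hence "i' < i" using le by simp
    then show ?thesis using s i(1) by (simp add: sorted_wrt_iff_nth_less)
  qed simp
  then show "(i', j') \<in> diagram mu" using i le by (simp add: diagram_def)
qed

lemma addable_if_shape_insert:
  assumes sh: "shape T = S" and ij: "(i, j) \<notin> S" and dc: "down_closed (insert (i, j) S)"
  shows "addable T i j"
proof -
  have dc': "\<And>i' j'. i' \<le> i \<Longrightarrow> j' \<le> j \<Longrightarrow> (i', j') \<in> insert (i, j) S"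
    using dc unfolding down_closed_def by blast
  have "(i - 1, j) \<in> shape T" if "0 < i" using dc'[of "i - 1" j] that sh by auto
  moreover have "(i, j - 1) \<in> shape T" if "0 < j" using dc'[of i "j - 1"] that sh by auto
  ultimately show ?thesis using sh ij unfolding addable_def by blast
qed

lemma corner_if_shape_remove:
  assumes sh: "shape T = S" and ij: "(i, j) \<in> S" and dc: "down_closed (S - {(i, j)})"
  shows "corner T i j"
proof -
  have dc': "\<And>i' j'. i \<le> i' \<Longrightarrow> j \<le> j' \<Longrightarrow> (i', j') \<notin> S - {(i, j)}"
    using dc unfolding down_closed_def by blast
  have "(Suc i, j) \<notin> S" using dc'[of "Suc i" j] by auto
  moreover have "(i, Suc j) \<notin> S" using dc'[of i "Suc j"] by auto
  ultimately show ?thesis using corner_of_shape sh ij by simp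
qed

lemma card_symdiff_eq_1:
  assumes "card (symdiff X Y) = 1"
  shows "(\<exists>b. b \<notin> X \<and> Y = insert b X \<and> X \<subset> Y \<and> the_elem (symdiff X Y) = b) \<or>
         (\<exists>b. b \<in> X \<and> Y = X - {b} \<and> \<not> X \<subset> Y \<and> the_elem (symdiff X Y) = b)"
proof -
  obtain b where b: "symdiff X Y = {b}" using assms card_1_singletonE by metis
  have te: "the_elem (symdiff X Y) = b" using b by simp
  have u: "\<And>v. (v \<in> X \<and> v \<notin> Y) \<or> (v \<in> Y \<and> v \<notin> X) \<longleftrightarrow> v = b"
  proof -
    fix v
    have "v \<in> symdiff X Y \<longleftrightarrow> v = b" using b by simp
    then show "(v \<in> X \<and> v \<notin> Y) \<or> (v \<in> Y \<and> v \<notin> X) \<longleftrightarrow> v = b" by (simp add: symdiff_def)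
  qed
  show ?thesis
  proof (cases "b \<in> Y")
    case True
    have bX: "b \<notin> X" using u[of b] True by simp
    have "\<And>v. v \<in> Y \<longleftrightarrow> v = b \<or> v \<in> X" using u True bX by metis
    hence "Y = insert b X" by auto
    moreover have "X \<subset> Y" using \<open>Y = insert b X\<close> bX by auto
    ultimately show ?thesis using te bX by auto
  next
    case False
    have bX: "b \<in> X" using u[of b] False by simp
    have "\<And>v. v \<in> Y \<longleftrightarrow> v \<noteq> b \<and> v \<in> X" using u False bX by metis
    hence "Y = X - {b}" by auto
    moreover have "\<not> X \<subset> Y" using \<open>Y = X - {b}\<close> bX by auto
    ultimately show ?thesis using te bX by auto
  qed
qed

locale sundaram_run =
  fixes r :: nat and mus :: "nat list list"
  assumes ot: "osc_tableau r mus"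
begin

abbreviation "D k \<equiv> diagram (mus ! k)"
abbreviation "box k \<equiv> step_box mus k"

lemma length_mus: "length mus = Suc r" using ot by (simp add: osc_tableau_def)

lemma down_closed_D: "k \<le> r \<Longrightarrow> down_closed (D k)"
  using ot length_mus by (intro down_closed_diagram) (auto simp: osc_tableau_def)

lemma D_0: "D 0 = {}" using ot by (simp add: osc_tableau_def diagram_def)

lemma D_Suc_exp:
  assumes "Suc k \<le> r" "is_exp mus (Suc k)"
  shows "box (Suc k) \<notin> D k \<and> D (Suc k) = insert (box (Suc k)) (D k)"
proof -
  have "card (symdiff (D k) (D (Suc k))) = 1" using ot assms(1) by (simp add: osc_tableau_def)
  hence sd: "(\<exists>b. b \<notin> D k \<and> D (Suc k) = insert b (D k) \<and> D k \<subset> D (Suc k) \<and> the_elem (symdiff (D k) (D (Suc k))) = b) \<or>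
         (\<exists>b. b \<in> D k \<and> D (Suc k) = D k - {b} \<and> \<not> D k \<subset> D (Suc k) \<and> the_elem (symdiff (D k) (D (Suc k))) = b)"
    by (rule card_symdiff_eq_1)
  have ex: "D k \<subset> D (Suc k)" using assms(2) by (simp add: is_exp_def)
  have sbx: "box (Suc k) = the_elem (symdiff (D k) (D (Suc k)))" by (simp add: step_box_def)
  from sd ex obtain b where h: "b \<notin> D k" "D (Suc k) = insert b (D k)" "the_elem (symdiff (D k) (D (Suc k))) = b" by blast
  have "box (Suc k) = b" using trans[OF sbx h(3)] .
  then show ?thesis using h(1,2) by simp
qed

lemma D_Suc_con:
  assumes "Suc k \<le> r" "\<not> is_exp mus (Suc k)"
  shows "box (Suc k) \<in> D k \<and> D (Suc k) = D k - {box (Suc k)}"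
proof -
  have "card (symdiff (D k) (D (Suc k))) = 1" using ot assms(1) by (simp add: osc_tableau_def)
  hence sd: "(\<exists>b. b \<notin> D k \<and> D (Suc k) = insert b (D k) \<and> D k \<subset> D (Suc k) \<and> the_elem (symdiff (D k) (D (Suc k))) = b) \<or>
         (\<exists>b. b \<in> D k \<and> D (Suc k) = D k - {b} \<and> \<not> D k \<subset> D (Suc k) \<and> the_elem (symdiff (D k) (D (Suc k))) = b)"
    by (rule card_symdiff_eq_1)
  have ex: "\<not> D k \<subset> D (Suc k)" using assms(2) by (simp add: is_exp_def)
  have sbx: "box (Suc k) = the_elem (symdiff (D k) (D (Suc k)))" by (simp add: step_box_def)
  from sd ex obtain b where h: "b \<in> D k" "D (Suc k) = D k - {b}" "the_elem (symdiff (D k) (D (Suc k))) = b" by blast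
  have "box (Suc k) = b" using trans[OF sbx h(3)] .
  then show ?thesis using h(1,2) by simp
qed

lemma addable_box:
  assumes "Suc k \<le> r" "is_exp mus (Suc k)" "shape T = D k"
  shows "addable T (fst (box (Suc k))) (snd (box (Suc k)))"
proof -
  obtain i j where b: "box (Suc k) = (i, j)" by (metis surj_pair)
  show ?thesis
    using addable_if_shape_insert[OF assms(3)] D_Suc_exp[OF assms(1,2)] down_closed_D[OF assms(1)] b
    by simp
qed

lemma corner_box:
  assumes "Suc k \<le> r" "\<not> is_exp mus (Suc k)" "shape T = D k"
  shows "corner T (fst (box (Suc k))) (snd (box (Suc k)))"
proof -
  obtain i j where b: "box (Suc k) = (i, j)" by (metis surj_pair)
  show ?thesis
    using corner_if_shape_remove[OF assms(3)] D_Suc_con[OF assms(1,2)] down_closed_D[OF assms(1)] b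
    by simp
qed

definition state :: "nat \<Rightarrow> (nat \<times> nat) set \<times> nat list list" where
  "state k = foldl (sundaram_step mus) ({}, []) [1..<Suc k]"

abbreviation "pairs k \<equiv> fst (state k)"
abbreviation "tab k \<equiv> snd (state k)"

lemma state_0: "state 0 = ({}, [])" by (simp add: state_def)

lemma state_Suc: "state (Suc k) = sundaram_step mus (state k) (Suc k)" by (simp add: state_def)

lemma sundaram_part1_eq_state: "sundaram_part1 mus = state r"
  using length_mus by (simp add: state_def sundaram_part1_def)

lemma state_Suc_exp: "is_exp mus (Suc k) \<Longrightarrow> state (Suc k) = (pairs k, place (tab k) (box (Suc k)) (Suc k))"
  by (simp add: state_Suc sundaram_step_def split: prod.splits)

lemma state_Suc_con: "\<not> is_exp mus (Suc k) \<Longrightarrow>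
  state (Suc k) = (insert (fst (col_del (tab k) (box (Suc k))), Suc k) (pairs k), snd (col_del (tab k) (box (Suc k))))"
  by (simp add: state_Suc sundaram_step_def split: prod.splits)

definition state_inv :: "nat \<Rightarrow> bool" where
  "state_inv k \<longleftrightarrow> wf_tab (tab k) \<and> shape (tab k) = D k \<and> entries (tab k) \<inter> inv_support (pairs k) = {} \<and>
     entries (tab k) \<union> inv_support (pairs k) = {1..k} \<and>
     (\<forall>(a, b)\<in>pairs k. a < b \<and> b \<le> k \<and> \<not> is_exp mus b \<and> is_exp mus a) \<and>
     matching (pairs k) \<and> (\<forall>v\<in>entries (tab k). is_exp mus v)"

lemma state_inv_0: "state_inv 0"
  by (simp add: state_inv_def state_0 shape_def D_0 inv_support_def matching_def)

lemma state_inv_Suc_exp: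
  assumes I: "state_inv k" and k: "Suc k \<le> r" and e: "is_exp mus (Suc k)"
  shows "state_inv (Suc k)"
proof -
  let ?T = "tab k" and ?P = "pairs k"
  let ?T2 = "place ?T (box (Suc k)) (Suc k)"
  have wf: "wf_tab ?T" and sh: "shape ?T = D k" and I3: "entries ?T \<inter> inv_support ?P = {}"
    and I4: "entries ?T \<union> inv_support ?P = {1..k}"
    and I5: "\<forall>(a, b)\<in>?P. a < b \<and> b \<le> k \<and> \<not> is_exp mus b \<and> is_exp mus a"
    and I6: "matching ?P" and I7: "\<forall>v\<in>entries ?T. is_exp mus v"
    using I by (simp_all add: state_inv_def)
  have st: "state (Suc k) = (?P, ?T2)" using state_Suc_exp[OF e] by simp
  have ad: "addable ?T (fst (box (Suc k))) (snd (box (Suc k)))" using addable_box[OF k e sh] .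
  have big: "\<forall>v\<in>entries ?T. v < Suc k"
  proof
    fix v assume "v \<in> entries ?T"
    then have "v \<in> {1..k}" using I4 by blast
    then show "v < Suc k" by simp
  qed
  have ent2: "entries ?T2 = insert (Suc k) (entries ?T)" using entries_place[OF ad] by simp
  have "wf_tab ?T2" using wf_tab_place[OF ad wf big] by simp
  moreover have "shape ?T2 = D (Suc k)" using shape_place[OF ad] sh D_Suc_exp[OF k e] by simp
  moreover have "entries ?T2 \<inter> inv_support ?P = {}" using ent2 I3 I4 by auto
  moreover have "entries ?T2 \<union> inv_support ?P = {1..Suc k}"
    using ent2 I4 by (auto simp: atLeastAtMostSuc_conv)
  moreover have "\<forall>(a, b)\<in>?P. a < b \<and> b \<le> Suc k \<and> \<not> is_exp mus b \<and> is_exp mus a" using I5 by auto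
  moreover have "\<forall>v\<in>entries ?T2. is_exp mus v" using ent2 I7 e by auto
  ultimately show ?thesis using I6 unfolding state_inv_def st fst_conv snd_conv by blast
qed

lemma state_inv_Suc_con:
  assumes I: "state_inv k" and k: "Suc k \<le> r" and e: "\<not> is_exp mus (Suc k)"
  shows "state_inv (Suc k)"
proof -
  let ?T = "tab k" and ?P = "pairs k"
  obtain i j where b: "box (Suc k) = (i, j)" by (metis surj_pair)
  have wf: "wf_tab ?T" and sh: "shape ?T = D k" and I3: "entries ?T \<inter> inv_support ?P = {}"
    and I4: "entries ?T \<union> inv_support ?P = {1..k}"
    and I5: "\<forall>(a, b)\<in>?P. a < b \<and> b \<le> k \<and> \<not> is_exp mus b \<and> is_exp mus a"
    and I6: "matching ?P" and I7: "\<forall>v\<in>entries ?T. is_exp mus v"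
    using I by (simp_all add: state_inv_def)
  have cor: "corner ?T i j" using corner_box[OF k e sh] b by simp
  interpret c: col_deletion ?T i j using wf cor by unfold_locales
  let ?P2 = "insert (c.x, Suc k) ?P"
  have st: "state (Suc k) = (?P2, c.T')" using state_Suc_con[OF e] b c.col_del_T by simp
  have x: "c.x \<in> entries ?T" by (rule c.x_in_T)
  have "c.x \<in> {1..k}" using x I4 by blast
  then have xk: "c.x < Suc k" "is_exp mus c.x" using x I7 by auto
  have supp: "inv_support ?P2 = insert c.x (insert (Suc k) (inv_support ?P))"
    by (auto simp: inv_support_def)
  have e': "entries c.T' = entries ?T - {c.x}" by (rule c.entries_T')
  have "shape c.T' = D (Suc k)" using shape_col_del[OF wf cor] c.col_del_T sh D_Suc_con[OF k e] b by simp
  moreover have "matching ?P2"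
  proof (rule matching_insert[OF I6])
    show "c.x \<noteq> Suc k" "c.x \<notin> inv_support ?P" "Suc k \<notin> inv_support ?P" using xk x I3 I4 by auto
  qed
  moreover have "entries c.T' \<union> inv_support ?P2 = {1..Suc k}"
    unfolding supp using e' x I4 by (auto simp: atLeastAtMostSuc_conv)
  moreover have "entries c.T' \<inter> inv_support ?P2 = {}"
  proof -
    have "entries ?T \<subseteq> {1..k}" using I4 by blast
    then show ?thesis unfolding supp using e' I3 by auto
  qed
  moreover have "\<forall>(a, b)\<in>?P2. a < b \<and> b \<le> Suc k \<and> \<not> is_exp mus b \<and> is_exp mus a"
    using I5 xk e by auto
  moreover have "\<forall>v\<in>entries c.T'. is_exp mus v" using I7 e' by auto
  ultimately show ?thesis using c.wf_T' unfolding state_inv_def st fst_conv snd_conv by blast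
qed

lemma state_inv_all: "k \<le> r \<Longrightarrow> state_inv k"
  by (induction k) (auto intro: state_inv_0 state_inv_Suc_exp state_inv_Suc_con)

lemma state_invD:
  assumes "m \<le> r"
  shows "wf_tab (tab m)" "shape (tab m) = D m" "entries (tab m) \<inter> inv_support (pairs m) = {}"
     "entries (tab m) \<union> inv_support (pairs m) = {1..m}"
     "\<forall>(a, b)\<in>pairs m. a < b \<and> b \<le> m \<and> \<not> is_exp mus b \<and> is_exp mus a" "matching (pairs m)"
     "\<forall>v\<in>entries (tab m). is_exp mus v"
  using state_inv_all[OF assms] unfolding state_inv_def by blast+

lemma pairs_subset_Suc: "pairs m \<subseteq> pairs (Suc m)"
  by (cases "is_exp mus (Suc m)") (auto simp: state_Suc_exp state_Suc_con)

lemma pairs_mono: "k \<le> m \<Longrightarrow> pairs k \<subseteq> pairs m"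
  using lift_Suc_mono_le[of pairs, OF pairs_subset_Suc] .

lemma addable_step_box:
  assumes "Suc k \<le> r" "is_exp mus (Suc k)"
  shows "addable (tab k) (fst (box (Suc k))) (snd (box (Suc k)))"
  using addable_box[OF assms state_invD(2)] assms(1) by simp

lemma corner_step_box:
  assumes "Suc k \<le> r" "\<not> is_exp mus (Suc k)"
  shows "corner (tab k) (fst (box (Suc k))) (snd (box (Suc k)))"
  using corner_box[OF assms state_invD(2)] assms(1) by simp

lemma con_pair_in_pairs:
  assumes "Suc k \<le> r" "\<not> is_exp mus (Suc k)"
  shows "(fst (col_del (tab k) (box (Suc k))), Suc k) \<in> pairs r"
proof -
  have "(fst (col_del (tab k) (box (Suc k))), Suc k) \<in> pairs (Suc k)" using state_Suc_con[OF assms(2)] by simp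
  then show ?thesis using pairs_mono[OF assms(1)] by blast
qed

lemma inv_partner_le: "m \<le> r \<Longrightarrow> a \<in> inv_support (pairs m) \<Longrightarrow> inv_partner (pairs m) a \<le> m"
proof -
  assume m: "m \<le> r" and a: "a \<in> inv_support (pairs m)"
  have "inv_partner (pairs m) a \<in> inv_support (pairs m)" using inv_partner_support[OF state_invD(6)[OF m] a] by simp
  then show ?thesis using state_invD(4)[OF m] by auto
qed

lemma less_inv_partner_if_exp:
  assumes m: "m \<le> r" and a: "a \<in> inv_support (pairs m)" and e: "is_exp mus a"
  shows "a < inv_partner (pairs m) a"
proof -
  obtain p where p: "p \<in> pairs m" "a = fst p \<or> a = snd p" using a unfolding inv_support_def by auto
  obtain u v where uv: "p = (u, v)" by (cases p)
  have props: "u < v" "\<not> is_exp mus v" using state_invD(5)[OF m] p uv by auto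
  hence "a = u" using p uv e by auto
  then show ?thesis using inv_partner_pair[OF state_invD(6)[OF m]] p uv props by auto
qed

lemma is_exp_if_entry: "m \<le> r \<Longrightarrow> v \<in> entries (tab m) \<Longrightarrow> is_exp mus v" using state_invD(7) by blast

lemma inv_partner_stable:
  assumes "m \<le> r" "a \<in> inv_support (pairs k)" "k \<le> m"
  shows "inv_partner (pairs m) a = inv_partner (pairs k) a"
proof -
  have k: "k \<le> r" using assms by simp
  obtain p where p: "p \<in> pairs k" "a = fst p \<or> a = snd p" using assms(2) unfolding inv_support_def by auto
  obtain u v where uv: "p = (u, v)" by (cases p)
  have pm: "p \<in> pairs m" using pairs_mono[OF assms(3)] p by blast
  show ?thesis using inv_partner_pair[OF state_invD(6)[OF k]] inv_partner_pair[OF state_invD(6)[OF assms(1)]] p pm uv by auto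
qed

lemma entry_range: "m \<le> r \<Longrightarrow> v \<in> entries (tab m) \<Longrightarrow> 1 \<le> v \<and> v \<le> m"
  using state_invD(4) by fastforce

lemma entry_or_support: "m \<le> r \<Longrightarrow> 1 \<le> v \<Longrightarrow> v \<le> m \<Longrightarrow> v \<in> entries (tab m) \<or> v \<in> inv_support (pairs m)"
  using state_invD(4) by (metis UnE atLeastAtMost_iff)

lemma inv_partner_con:
  assumes "Suc k \<le> r" "\<not> is_exp mus (Suc k)"
  shows "inv_partner (pairs r) (Suc k) = fst (col_del (tab k) (box (Suc k)))"
  using inv_partner_pair[OF state_invD(6)[OF order_refl] con_pair_in_pairs[OF assms]] by simp

lemma q_desc_exp_con:
  assumes "1 \<le> k" "Suc k \<le> r" "is_exp mus k" "\<not> is_exp mus (Suc k)"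
  shows "q_desc (tab r) (inv_partner (pairs r)) k"
proof -
  have nsk: "Suc k \<notin> entries (tab r)" using is_exp_if_entry assms(4) by blast
  show ?thesis
  proof (cases "k \<in> entries (tab r)")
    case True then show ?thesis using nsk by (simp add: q_desc_def)
  next
    case False
    have kA: "k \<in> inv_support (pairs r)" using entry_or_support[of r k] False assms by simp
    have "k < inv_partner (pairs r) k" using less_inv_partner_if_exp[OF order_refl kA assms(3)] .
    moreover have "inv_partner (pairs r) (Suc k) < Suc k"
    proof -
      obtain i j where b: "box (Suc k) = (i, j)" by (metis surj_pair)
      have cor: "corner (tab k) i j" using corner_step_box[OF assms(2,4)] b by simp
      interpret c: col_deletion "tab k" i j using state_invD(1)[of k] assms(2) cor by unfold_locales simp_all
      have "inv_partner (pairs r) (Suc k) = c.x" using inv_partner_con[OF assms(2,4)] b c.col_del_T by simp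
      moreover have "c.x \<in> entries (tab k)" by (rule c.x_in_T)
      ultimately show ?thesis using entry_range[of k] assms(2) by fastforce
    qed
    ultimately show ?thesis using False nsk by (simp add: q_desc_def)
  qed
qed

lemma not_q_desc_con_exp:
  assumes "1 \<le> k" "Suc k \<le> r" "\<not> is_exp mus k" "is_exp mus (Suc k)"
  shows "\<not> q_desc (tab r) (inv_partner (pairs r)) k"
proof -
  have nk: "k \<notin> entries (tab r)" using is_exp_if_entry assms(3) by blast
  show ?thesis
  proof (cases "Suc k \<in> entries (tab r)")
    case True then show ?thesis using nk by (simp add: q_desc_def)
  next
    case False
    have kA: "Suc k \<in> inv_support (pairs r)" using entry_or_support[of r "Suc k"] False assms by simp
    have "Suc k < inv_partner (pairs r) (Suc k)" using less_inv_partner_if_exp[OF order_refl kA assms(4)] .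
    moreover have "inv_partner (pairs r) k < k"
    proof -
      obtain k0 where k0: "k = Suc k0" using assms(1) by (cases k) auto
      obtain i j where b: "box k = (i, j)" by (metis surj_pair)
      have cor: "corner (tab k0) i j" using corner_step_box[of k0] assms k0 b by simp
      interpret c: col_deletion "tab k0" i j using state_invD(1)[of k0] assms(2) k0 cor by unfold_locales simp_all
      have "inv_partner (pairs r) k = c.x" using inv_partner_con[of k0] assms k0 b c.col_del_T by simp
      moreover have "c.x \<in> entries (tab k0)" by (rule c.x_in_T)
      ultimately show ?thesis using entry_range[of k0] assms(2) k0 by fastforce
    qed
    ultimately show ?thesis using False nk by (simp add: q_desc_def)
  qed
qed

lemma q_desc_con_con:
  assumes "1 \<le> k" "Suc k \<le> r" "\<not> is_exp mus k" "\<not> is_exp mus (Suc k)"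
  shows "q_desc (tab r) (inv_partner (pairs r)) k \<longleftrightarrow> fst (box (Suc k)) < fst (box k)"
proof -
  have nk: "k \<notin> entries (tab r)" "Suc k \<notin> entries (tab r)" using is_exp_if_entry assms(3,4) by blast+
  obtain k0 where k0: "k = Suc k0" using assms(1) by (cases k) auto
  obtain i j where b: "box k = (i, j)" by (metis surj_pair)
  obtain i' j' where b': "box (Suc k) = (i', j')" by (metis surj_pair)
  have w0: "wf_tab (tab k0)" using state_invD(1)[of k0] assms(2) k0 by simp
  have cor: "corner (tab k0) i j" using corner_step_box[of k0] assms k0 b by simp
  have tab: "tab k = snd (col_del (tab k0) (i, j))" using state_Suc_con[of k0] assms(3) k0 b by simp
  have cor': "corner (snd (col_del (tab k0) (i, j))) i' j'" using corner_step_box[of k] assms b' tab by simp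
  have p1: "inv_partner (pairs r) k = fst (col_del (tab k0) (i, j))" using inv_partner_con[of k0] assms k0 b by simp
  have p2: "inv_partner (pairs r) (Suc k) = fst (col_del (snd (col_del (tab k0) (i, j))) (i', j'))"
    using inv_partner_con[of k] assms b' tab by simp
  have "q_desc (tab r) (inv_partner (pairs r)) k \<longleftrightarrow> inv_partner (pairs r) (Suc k) < inv_partner (pairs r) k"
    using nk by (simp add: q_desc_def)
  also have "\<dots> \<longleftrightarrow> i' < i" using col_del_twice_output_less_iff[OF w0 cor cor'] p1 p2 by simp
  finally show ?thesis using b b' by simp
qed

lemma q_desc_exp_exp_base:
  assumes "1 \<le> k" "Suc k \<le> r" "is_exp mus k" "is_exp mus (Suc k)"
  shows "q_desc (tab (Suc k)) (inv_partner (pairs (Suc k))) k \<longleftrightarrow> fst (box k) < fst (box (Suc k))"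
proof -
  obtain k0 where k0: "k = Suc k0" using assms(1) by (cases k) auto
  have ad1: "addable (tab k0) (fst (box k)) (snd (box k))" using addable_step_box[of k0] assms k0 by simp
  have w0: "wf_tab (tab k0)" using state_invD(1)[of k0] assms(2) k0 by simp
  have big0: "\<forall>v\<in>entries (tab k0). v < k" using entry_range[of k0] assms(2) k0 by fastforce
  have T1: "tab k = place (tab k0) (fst (box k), snd (box k)) k" using state_Suc_exp[of k0] assms(3) k0 by simp
  have pf1: "wf_tab (tab k) \<and> entries (tab k) = insert k (entries (tab k0)) \<and> row_of (tab k) k = fst (box k)"
    using wf_tab_place[OF ad1 w0 big0] entries_place[OF ad1] col_row_of_place[OF ad1 w0 big0] T1 by simp
  have ad2: "addable (tab k) (fst (box (Suc k))) (snd (box (Suc k)))" using addable_step_box[of k] assms by simp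
  have big1: "\<forall>v\<in>entries (tab k). v < Suc k" using entry_range[of k] assms(2) by fastforce
  have T2: "tab (Suc k) = place (tab k) (fst (box (Suc k)), snd (box (Suc k))) (Suc k)" using state_Suc_exp[of k] assms(4) by simp
  have pf2: "wf_tab (tab (Suc k)) \<and> entries (tab (Suc k)) = insert (Suc k) (entries (tab k)) \<and>
      row_of (tab (Suc k)) (Suc k) = fst (box (Suc k)) \<and> row_of (tab (Suc k)) k = row_of (tab k) k"
    using wf_tab_place[OF ad2 _ big1] entries_place[OF ad2] col_row_of_place[OF ad2 _ big1]
      col_row_of_place_old[OF ad2 _ big1, of k] T2 pf1 by simp
  have ins: "k \<in> entries (tab (Suc k))" "Suc k \<in> entries (tab (Suc k))" using pf1 pf2 by auto
  have "col_desc (tab (Suc k)) k \<longleftrightarrow> row_of (tab (Suc k)) k < row_of (tab (Suc k)) (Suc k)"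
    unfolding col_desc_def by (rule col_desc_iff_row_less) (use pf2 ins in auto)
  then show ?thesis using ins pf1 pf2 by (simp add: q_desc_def)
qed

lemma q_desc_stable:
  assumes "1 \<le> k" "Suc k \<le> m" "Suc m \<le> r"
  shows "q_desc (tab (Suc m)) (inv_partner (pairs (Suc m))) k \<longleftrightarrow> q_desc (tab m) (inv_partner (pairs m)) k"
proof -
  have mr: "m \<le> r" using assms by simp
  have wf: "wf_tab (tab m)" using state_invD(1)[OF mr] .
  show ?thesis
  proof (cases "is_exp mus (Suc m)")
    case True
    have ad: "addable (tab m) (fst (box (Suc m))) (snd (box (Suc m)))"
      using addable_step_box[of m] assms True by simp
    have big: "\<forall>v\<in>entries (tab m). v < Suc m" using entry_range[OF mr] by fastforce
    show ?thesis using q_desc_place[OF ad wf big] state_Suc_exp[OF True] assms by simp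
  next
    case False
    obtain i j where b: "box (Suc m) = (i, j)" by (metis surj_pair)
    have cor: "corner (tab m) i j" using corner_step_box[of m] assms False b by simp
    interpret c: col_deletion "tab m" i j using wf cor by unfold_locales
    have T2: "tab (Suc m) = c.T'" and P2: "pairs (Suc m) = insert (c.x, Suc m) (pairs m)"
      using state_Suc_con[of m] False b c.col_del_T by simp_all
    have "inv_partner (pairs (Suc m)) c.x = Suc m"
      using inv_partner_pair[OF state_invD(6)[OF assms(3)], of c.x "Suc m"] P2 by simp
    moreover have "\<forall>a\<in>inv_support (pairs m). inv_partner (pairs (Suc m)) a = inv_partner (pairs m) a
        \<and> inv_partner (pairs m) a < Suc m"
      using inv_partner_stable[of "Suc m" _ m] inv_partner_le[OF mr] assms by fastforce
    moreover have "k \<in> entries (tab m) \<union> inv_support (pairs m)"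
      "Suc k \<in> entries (tab m) \<union> inv_support (pairs m)"
      using entry_or_support[OF mr] assms by auto
    ultimately show ?thesis using c.q_desc_col_del state_invD(3)[OF mr] T2 by simp
  qed
qed

lemma q_desc_exp_exp:
  assumes "1 \<le> k" "Suc k \<le> r" "is_exp mus k" "is_exp mus (Suc k)"
  shows "Suc k \<le> m \<Longrightarrow> m \<le> r \<Longrightarrow> q_desc (tab m) (inv_partner (pairs m)) k \<longleftrightarrow> fst (box k) < fst (box (Suc k))"
proof (induction m)
  case 0 then show ?case by simp
next
  case (Suc m)
  show ?case
  proof (cases "Suc k = Suc m")
    case True then show ?thesis using q_desc_exp_exp_base[OF assms] by simp
  next
    case False
    hence "Suc k \<le> m" using Suc.prems by simp
    then show ?thesis using Suc.IH Suc.prems q_desc_stable[OF assms(1) _ Suc.prems(2)] by simp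
  qed
qed

lemma sundaram_Q_eq: "sundaram_Q mus = Q_of (pairs r) (tab r)"
  using sundaram_Q_eq_Q_of by (simp add: sundaram_part1_eq_state split: prod.splits)

lemma tab_Des_sundaram_Q:
  "tab_Des (sundaram_Q mus) = {k. 1 \<le> k \<and> Suc k \<le> r \<and> q_desc (tab r) (inv_partner (pairs r)) k}"
proof -
  let ?P = "pairs r" and ?T = "tab r"
  have wT: "wf_tab ?T" and mP: "matching ?P" and dj: "entries ?T \<inter> inv_support ?P = {}"
    and cv: "entries ?T \<union> inv_support ?P = {1..r}" using state_invD[OF order_refl] by auto
  have fin: "finite (inv_support ?P)" using cv by (metis finite_Un finite_atLeastAtMost)
  let ?Q = "Q_of ?P ?T"
  have wQ: "wf_tab ?Q" and eQ: "entries ?Q = {1..r}"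
    using wf_tab_Q_of[OF mP fin wT dj] entries_Q_of[OF mP fin wT dj] cv by simp_all
  have "k \<in> tab_Des ?Q \<longleftrightarrow> 1 \<le> k \<and> Suc k \<le> r \<and> q_desc ?T (inv_partner ?P) k" for k
  proof (cases "1 \<le> k \<and> Suc k \<le> r")
    case True
    then have ins: "k \<in> entries ?Q" "Suc k \<in> entries ?Q" using eQ by auto
    have "k \<in> tab_Des ?Q \<longleftrightarrow> col_desc ?Q k"
      using tab_row_eq_row_of[OF wQ ins(1)] tab_row_eq_row_of[OF wQ ins(2)] col_desc_iff_row_less[OF wQ ins]
        ins by (simp add: tab_Des_def col_desc_def)
    also have "\<dots> \<longleftrightarrow> q_desc ?T (inv_partner ?P) k"
      using col_desc_Q_of[OF mP fin wT dj] ins cv eQ by simp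
    finally show ?thesis using True by simp
  next
    case False
    then have "\<not> (k \<in> entries ?Q \<and> Suc k \<in> entries ?Q)" using eQ by auto
    then show ?thesis using False by (auto simp: tab_Des_def)
  qed
  then show ?thesis unfolding sundaram_Q_eq by blast
qed

lemma osc_Des_eq_q_desc:
  "osc_Des mus = {k. 1 \<le> k \<and> Suc k \<le> r \<and> q_desc (tab r) (inv_partner (pairs r)) k}"
proof -
  have "k \<in> osc_Des mus \<longleftrightarrow> q_desc (tab r) (inv_partner (pairs r)) k" if k: "1 \<le> k" "Suc k \<le> r" for k
  proof -
    consider "is_exp mus k" "\<not> is_exp mus (Suc k)" | "is_exp mus k" "is_exp mus (Suc k)"
      | "\<not> is_exp mus k" "is_exp mus (Suc k)" | "\<not> is_exp mus k" "\<not> is_exp mus (Suc k)" by blast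
    then show ?thesis
    proof cases
      case 1 then show ?thesis using q_desc_exp_con[OF k] k length_mus by (simp add: osc_Des_def)
    next
      case 2 then show ?thesis using q_desc_exp_exp[OF k _ _ k(2) order_refl] k length_mus
        by (simp add: osc_Des_def)
    next
      case 3 then show ?thesis using not_q_desc_con_exp[OF k] k length_mus by (simp add: osc_Des_def)
    next
      case 4 then show ?thesis using q_desc_con_con[OF k] k length_mus by (auto simp: osc_Des_def)
    qed
  qed
  moreover have "k \<in> osc_Des mus \<Longrightarrow> 1 \<le> k \<and> Suc k \<le> r" for k
    using length_mus by (simp add: osc_Des_def)
  ultimately show ?thesis by blast
qed

end

theorem theorem6p1:
  fixes r :: nat and mus :: "nat list list"
  assumes "osc_tableau r mus"
  shows "osc_Des mus = tab_Des (sundaram_Q mus)"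
proof -
  interpret sundaram_run r mus using assms by unfold_locales
  show ?thesis using osc_Des_eq_q_desc tab_Des_sundaram_Q by simp
qed

end
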